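(* Let $G$ be the line graph with $V=\{1,\dots,|V|\}$ and $E=\{(1,2),(2,3),\dots,(|V|-1,|V|)\}$. Let $\lambda_v>0$, $r_v>0$, $\rho_v=\lambda_v/r_v$. Under the maximal throughput allocation, $N(t)$ is positive recurrent if and only if $\sum_{v\in V}\rho_v<1$. If $\sum_{v\in V}\rho_v<1$, then in stationarity, for all $v\in V$, $$\mathbb E(N_v(t))=\frac{\rho_v\big(1+\sum_{v'\ge v}\rho_{v'}(\frac{r_v}{r_{v'}}-1)\big)}{\big(1-\sum_{v'\ge v}\rho_{v'}\big)\big(1-\sum_{v'>v}\rho_{v'}\big)},\qquad \psi_v=\frac{\lambda_v}{\mathbb E(N_v(t))}=\frac{r_v\big(1-\sum_{v'\ge v}\rho_{v'}\big)\big(1-\sum_{v'>v}\rho_{v'}\big)}{1+\sum_{v'\ge v}\rho_{v'}(\frac{r_v}{r_{v'}}-1)}.$$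
   Context: $N(t)\in\mathbb N^{V}$ is the continuous-time Markov chain with transition rates $n\to n+e^v$ at rate $\lambda_v$ and $n\to n-e^v$ at rate $r_v\gamma_v(n)\mathbf 1\{n_v\ge1\}$ ($e^v$ the $v$-th canonical basis vector). The maximal throughput allocation is $\gamma_v(n)=\prod_{v'\in\mathcal D(v)}\mathbf 1\{n_{v'}=0\}$, where $\mathcal D(v)$ is the set of strict descendants of $v$ (for the line graph, $\mathcal D(v)=\{v+1,\dots,|V|\}$): beam $v$ is served at full rate $r_v$ exactly when all its descendants are empty. *)

theory Defs
  imports "HOL-Analysis.Analysis"
begin

type_synonym state = "nat \<Rightarrow> nat"

definition line_edges :: "nat \<Rightarrow> (nat \<times> nat) set" where
  "line_edges n = {(v, Suc v) | v. 1 \<le> v \<and> Suc v \<le> n}"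

definition desc :: "nat \<Rightarrow> nat \<Rightarrow> nat set" where
  "desc n v = {w. (v, w) \<in> (line_edges n)\<^sup>+}"

definition states :: "nat \<Rightarrow> state set" where
  "states n = {x. \<forall>v. v \<notin> {1..n} \<longrightarrow> x v = 0}"

definition gamma :: "nat \<Rightarrow> nat \<Rightarrow> state \<Rightarrow> real" where
  "gamma n v x = (\<Prod>v'\<in>desc n v. (if x v' = 0 then 1 else 0))"

definition rate :: "nat \<Rightarrow> (nat \<Rightarrow> real) \<Rightarrow> (nat \<Rightarrow> real) \<Rightarrow> state \<Rightarrow> state \<Rightarrow> real" where
  "rate n lam r x y =
     (\<Sum>v\<in>{1..n}. (if y = x(v := Suc (x v)) then lam v else 0)
        + (if 1 \<le> x v \<and> y = x(v := x v - 1) then r v * gamma n v x else 0))"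

definition qout :: "nat \<Rightarrow> (nat \<Rightarrow> real) \<Rightarrow> (nat \<Rightarrow> real) \<Rightarrow> state \<Rightarrow> real" where
  "qout n lam r x = infsum (\<lambda>y. rate n lam r x y) (states n - {x})"

definition irreducible :: "nat \<Rightarrow> (nat \<Rightarrow> real) \<Rightarrow> (nat \<Rightarrow> real) \<Rightarrow> bool" where
  "irreducible n lam r \<longleftrightarrow>
     (\<forall>x\<in>states n. \<forall>y\<in>states n.
        (x, y) \<in> {(a, b). a \<in> states n \<and> b \<in> states n \<and> a \<noteq> b \<and> rate n lam r a b > 0}\<^sup>*)"

text \<open>Expected hitting time of state i (as a function of the starting state):
  the minimal non-negative solution of the standard hitting-time equations
  for a continuous-time Markov chain (Norris, Thm 3.3.3).\<close>
definition hit_time :: "nat \<Rightarrow> (nat \<Rightarrow> real) \<Rightarrow> (nat \<Rightarrow> real) \<Rightarrow> state \<Rightarrow> state \<Rightarrow> ennreal" where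
  "hit_time n lam r i = lfp (\<lambda>k y. if y = i then 0 else
       ennreal (1 / qout n lam r y)
       + infsum (\<lambda>z. ennreal (rate n lam r y z / qout n lam r y) * k z) (states n - {y}))"

definition mean_return :: "nat \<Rightarrow> (nat \<Rightarrow> real) \<Rightarrow> (nat \<Rightarrow> real) \<Rightarrow> state \<Rightarrow> ennreal" where
  "mean_return n lam r i =
     ennreal (1 / qout n lam r i)
     + infsum (\<lambda>z. ennreal (rate n lam r i z / qout n lam r i) * hit_time n lam r i z) (states n - {i})"

definition pos_recurrent :: "nat \<Rightarrow> (nat \<Rightarrow> real) \<Rightarrow> (nat \<Rightarrow> real) \<Rightarrow> bool" where
  "pos_recurrent n lam r \<longleftrightarrow>
     irreducible n lam r \<and> (\<forall>i\<in>states n. mean_return n lam r i < \<infinity>)"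

definition stationary :: "nat \<Rightarrow> (nat \<Rightarrow> real) \<Rightarrow> (nat \<Rightarrow> real) \<Rightarrow> (state \<Rightarrow> real) \<Rightarrow> bool" where
  "stationary n lam r \<pi> \<longleftrightarrow>
     (\<forall>x. \<pi> x \<ge> 0) \<and> (\<forall>x. x \<notin> states n \<longrightarrow> \<pi> x = 0) \<and>
     (\<pi> has_sum 1) (states n) \<and>
     (\<forall>x\<in>states n. \<pi> x * qout n lam r x = infsum (\<lambda>y. \<pi> y * rate n lam r y x) (states n - {x}))"

definition mean_N :: "nat \<Rightarrow> (state \<Rightarrow> real) \<Rightarrow> nat \<Rightarrow> real" where
  "mean_N n \<pi> v = infsum (\<lambda>x. real (x v) * \<pi> x) (states n)"

end

theory Submission
  imports Defs "HOL-Analysis.Harmonic_Numbers" "HOL-Library.Diagonal_Subsequence"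
begin

text \<open>
  The workload \<open>work x = (\<Sum>v. x v / r v)\<close> is a Lyapunov function. Under the maximal throughput
  allocation exactly one beam, the highest non-empty one, is served whenever the system is not idle,
  so the drift of the workload is \<open>\<rho> - 1\<close> away from the idle state, where \<open>\<rho> = (\<Sum>v. lam v / r v)\<close>.
  If \<open>\<rho> < 1\<close>, a supersolution built from the workload bounds the mean return times, and the
  Cesaro averages of the uniformised chain started empty are tight by the same drift bound, so a
  subsequence converges to a stationary distribution. If \<open>\<rho> \<ge> 1\<close>, the workload is subharmonic
  for the jump chain away from \<open>idle\<close>, and the mean return time to \<open>idle\<close> diverges like the
  harmonic series.

  In stationarity the generator of a suitable test function has mean zero. For the test function
  \<open>x w\<close> this says that \<open>w\<close> is the top non-empty beam with probability \<open>\<rho> w\<close>; for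
  \<open>(\<Sum>u\<ge>v. x u / r u)\<^sup>2\<close> it gives \<open>E (\<Sum>u\<ge>v. N u / r u) = (\<Sum>u\<ge>v. \<rho> u / r u) / (1 - (\<Sum>u\<ge>v. \<rho> u))\<close>,
  and differencing in \<open>v\<close> yields \<open>E N v\<close>.
\<close>

section \<open>Infinite sums\<close>

lemma has_sum_diff:
  fixes f g :: "'a \<Rightarrow> 'b::topological_ab_group_add"
  assumes "(f has_sum a) A" "(g has_sum b) A"
  shows "((\<lambda>x. f x - g x) has_sum (a - b)) A"
proof -
  have "((\<lambda>x. - g x) has_sum - b) A"
    by (rule has_sum_uminus[THEN iffD2]) (simp add: assms(2))
  from has_sum_add[OF assms(1) this] show ?thesis by simp
qed

lemma has_sum_sum:
  fixes f :: "'i \<Rightarrow> 'a \<Rightarrow> 'b::topological_comm_monoid_add"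
  assumes "finite I" "\<And>i. i \<in> I \<Longrightarrow> (f i has_sum s i) A"
  shows "((\<lambda>x. \<Sum>i\<in>I. f i x) has_sum (\<Sum>i\<in>I. s i)) A"
  using assms
proof (induction I rule: finite_induct)
  case (insert i I)
  then have "((\<lambda>x. f i x + (\<Sum>i\<in>I. f i x)) has_sum (s i + (\<Sum>i\<in>I. s i))) A"
    by (intro has_sum_add) auto
  with insert.hyps show ?case by simp
qed simp

lemma summable_on_real_bound:
  fixes f g :: "'a \<Rightarrow> real"
  assumes "g summable_on A" "\<And>x. x \<in> A \<Longrightarrow> \<bar>f x\<bar> \<le> g x"
  shows "f summable_on A"
proof -
  have "norm (f x) \<le> norm (g x)" if "x \<in> A" for x
    using assms(2)[OF that] by simp
  then show ?thesis
    using Infinite_Sum.abs_summable_on_comparison_test assms(1)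
    by (metis summable_on_iff_abs_summable_on_real)
qed

lemma sum_delta_pairs:
  fixes f :: "'a \<Rightarrow> 'b::comm_semiring_0"
  assumes "finite A"
  shows "(\<Sum>y\<in>A. (\<Sum>i\<in>I. (if y = a i then c i else 0) + (if Q i \<and> y = b i then d i else 0)) * f y)
    = (\<Sum>i\<in>I. (if a i \<in> A then c i * f (a i) else 0) + (if Q i \<and> b i \<in> A then d i * f (b i) else 0))"
proof -
  have delta: "(\<Sum>y\<in>A. (if R \<and> y = z then e else 0) * f y) = (if R \<and> z \<in> A then e * f z else 0)"
    for R z and e :: 'b
  proof -
    have "(\<Sum>y\<in>A. (if R \<and> y = z then e else 0) * f y) = (\<Sum>y\<in>A. if y = z then (if R then e * f z else 0) else 0)"
      by (intro sum.cong) auto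
    then show ?thesis
      using assms by (simp add: sum.delta)
  qed
  have "(\<Sum>y\<in>A. (\<Sum>i\<in>I. (if y = a i then c i else 0) + (if Q i \<and> y = b i then d i else 0)) * f y)
      = (\<Sum>y\<in>A. \<Sum>i\<in>I. (if True \<and> y = a i then c i else 0) * f y + (if Q i \<and> y = b i then d i else 0) * f y)"
    by (simp add: sum_distrib_right distrib_right)
  also have "\<dots> = (\<Sum>i\<in>I. \<Sum>y\<in>A. (if True \<and> y = a i then c i else 0) * f y + (if Q i \<and> y = b i then d i else 0) * f y)"
    by (rule sum.swap)
  also have "\<dots> = (\<Sum>i\<in>I. (if True \<and> a i \<in> A then c i * f (a i) else 0) + (if Q i \<and> b i \<in> A then d i * f (b i) else 0))"
    by (simp only: sum.distrib delta)
  finally show ?thesis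
    by simp
qed

section \<open>Transitions of the line network\<close>

abbreviation idle :: state where
  "idle \<equiv> (\<lambda>_. 0)"

definition arrive :: "nat \<Rightarrow> state \<Rightarrow> state" where
  "arrive v x = x(v := Suc (x v))"

definition depart :: "nat \<Rightarrow> state \<Rightarrow> state" where
  "depart v x = x(v := x v - 1)"

lemma line_edges_trancl_iff:
  "(v, w) \<in> (line_edges n)\<^sup>+ \<longleftrightarrow> 1 \<le> v \<and> v < w \<and> w \<le> n"
proof
  assume "(v, w) \<in> (line_edges n)\<^sup>+"
  then show "1 \<le> v \<and> v < w \<and> w \<le> n"
    by (induction rule: trancl_induct) (auto simp: line_edges_def)
next
  assume "1 \<le> v \<and> v < w \<and> w \<le> n"
  then show "(v, w) \<in> (line_edges n)\<^sup>+"
  proof (induction w)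
    case (Suc w)
    show ?case
    proof (cases "v = w")
      case True
      then show ?thesis
        using Suc.prems by (auto simp: line_edges_def intro!: r_into_trancl)
    next
      case False
      then have "(v, w) \<in> (line_edges n)\<^sup>+"
        using Suc by auto
      moreover have "(w, Suc w) \<in> line_edges n"
        using Suc.prems False by (auto simp: line_edges_def)
      ultimately show ?thesis
        by (rule trancl_into_trancl)
    qed
  qed simp
qed

lemma desc_line: "1 \<le> v \<Longrightarrow> desc n v = {v<..n}"
  by (auto simp: desc_def line_edges_trancl_iff)

lemma gamma_line: "1 \<le> v \<Longrightarrow> gamma n v x = (if \<forall>w\<in>{v<..n}. x w = 0 then 1 else 0)"
proof -
  assume v: "1 \<le> v"
  have "(\<Prod>w\<in>{v<..n}. if x w = 0 then 1 else 0::real) = (if \<forall>w\<in>{v<..n}. x w = 0 then 1 else 0)"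
  proof (cases "\<forall>w\<in>{v<..n}. x w = 0")
    case False
    then obtain w where "w \<in> {v<..n}" "x w \<noteq> 0"
      by auto
    then show ?thesis
      using False by (auto simp: prod_zero_iff)
  qed simp
  then show ?thesis
    unfolding gamma_def desc_line[OF v] .
qed

lemma gamma_0_or_1: "gamma n v x = 0 \<or> gamma n v x = 1"
  unfolding gamma_def
  by (cases "finite (desc n v)") (auto simp: prod_zero_iff intro!: prod.neutral)

lemma gamma_nonneg: "0 \<le> gamma n v x"
  using gamma_0_or_1[of n v x] by auto

lemma gamma_le_1: "gamma n v x \<le> 1"
  using gamma_0_or_1[of n v x] by auto

lemma arrive_in_states: "x \<in> states n \<Longrightarrow> v \<in> {1..n} \<Longrightarrow> arrive v x \<in> states n"
  by (auto simp: states_def arrive_def)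

lemma depart_in_states: "x \<in> states n \<Longrightarrow> depart v x \<in> states n"
  by (auto simp: states_def depart_def)

lemma idle_in_states: "idle \<in> states n"
  by (simp add: states_def)

lemma arrive_neq: "arrive v x \<noteq> x"
  by (auto simp: arrive_def fun_eq_iff)

lemma depart_neq: "1 \<le> x v \<Longrightarrow> depart v x \<noteq> x"
  by (auto simp: depart_def fun_eq_iff)

lemma arrive_depart: "1 \<le> x v \<Longrightarrow> arrive v (depart v x) = x"
  by (auto simp: arrive_def depart_def fun_eq_iff)

lemma depart_arrive [simp]: "depart v (arrive v x) = x"
  by (auto simp: arrive_def depart_def fun_eq_iff)

lemma eq_arrive_iff: "y = arrive v x \<longleftrightarrow> 1 \<le> y v \<and> x = depart v y"
  by (auto simp: arrive_def depart_def fun_eq_iff)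

lemma rate_eq:
  "rate n lam r x y =
     (\<Sum>v\<in>{1..n}. (if y = arrive v x then lam v else 0)
        + (if 1 \<le> x v \<and> y = depart v x then r v * gamma n v x else 0))"
  unfolding rate_def arrive_def depart_def ..

definition weighted :: "(nat \<Rightarrow> real) \<Rightarrow> nat \<Rightarrow> state \<Rightarrow> real" where
  "weighted a n x = (\<Sum>u\<in>{1..n}. a u * real (x u))"

lemma weighted_arrive: "v \<in> {1..n} \<Longrightarrow> weighted a n (arrive v x) = weighted a n x + a v"
proof -
  assume v: "v \<in> {1..n}"
  have "weighted a n (arrive v x) = (\<Sum>u\<in>{1..n}. a u * real (x u) + (if u = v then a v else 0))"
    unfolding weighted_def arrive_def by (intro sum.cong) (auto simp: algebra_simps)
  then show ?thesis
    using v by (simp add: sum.distrib weighted_def)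
qed

lemma weighted_depart:
  "v \<in> {1..n} \<Longrightarrow> 1 \<le> x v \<Longrightarrow> weighted a n (depart v x) = weighted a n x - a v"
proof -
  assume v: "v \<in> {1..n}" "1 \<le> x v"
  have "weighted a n (depart v x) = (\<Sum>u\<in>{1..n}. a u * real (x u) - (if u = v then a v else 0))"
    unfolding weighted_def depart_def using v by (intro sum.cong) (auto simp: algebra_simps of_nat_diff)
  then show ?thesis
    using v by (simp add: sum_subtractf weighted_def)
qed

definition top_beam :: "nat \<Rightarrow> state \<Rightarrow> nat" where
  "top_beam n x = Max {v\<in>{1..n}. 1 \<le> x v}"

lemma state_eq_idle_iff: "x \<in> states n \<Longrightarrow> x = idle \<longleftrightarrow> (\<forall>v\<in>{1..n}. x v = 0)"
  by (auto simp: states_def fun_eq_iff)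

lemma top_beamD:
  assumes "x \<in> states n" "x \<noteq> idle"
  shows "top_beam n x \<in> {1..n}" "1 \<le> x (top_beam n x)" "\<And>w. w \<in> {top_beam n x<..n} \<Longrightarrow> x w = 0"
proof -
  have ne: "{v\<in>{1..n}. 1 \<le> x v} \<noteq> {}"
    using assms state_eq_idle_iff[OF assms(1)] by auto
  have fin: "finite {v\<in>{1..n}. 1 \<le> x v}"
    by simp
  show "top_beam n x \<in> {1..n}" "1 \<le> x (top_beam n x)"
    using Max_in[OF fin ne] unfolding top_beam_def by auto
  fix w assume w: "w \<in> {top_beam n x<..n}"
  show "x w = 0"
  proof (rule ccontr)
    assume "x w \<noteq> 0"
    then have "w \<le> top_beam n x"
      unfolding top_beam_def using w \<open>top_beam n x \<in> {1..n}\<close> by (intro Max_ge[OF fin]) auto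
    then show False
      using w by auto
  qed
qed

lemma served_iff_top_beam:
  assumes "x \<in> states n" "u \<in> {1..n}"
  shows "1 \<le> x u \<and> gamma n u x = 1 \<longleftrightarrow> x \<noteq> idle \<and> u = top_beam n x"
proof
  assume served: "1 \<le> x u \<and> gamma n u x = 1"
  then have nonidle: "x \<noteq> idle"
    by auto
  have above: "\<forall>w\<in>{u<..n}. x w = 0"
    using served gamma_line[of u n x] assms(2) by (auto split: if_splits)
  have "u \<le> top_beam n x"
    unfolding top_beam_def using served assms(2) by (intro Max_ge) auto
  moreover have "top_beam n x \<le> u"
  proof (rule ccontr)
    assume "\<not> top_beam n x \<le> u"
    then have "top_beam n x \<in> {u<..n}"
      using top_beamD[OF assms(1) nonidle] by auto
    then show False
      using above top_beamD(2)[OF assms(1) nonidle] by auto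
  qed
  ultimately show "x \<noteq> idle \<and> u = top_beam n x"
    using nonidle by auto
next
  assume "x \<noteq> idle \<and> u = top_beam n x"
  then show "1 \<le> x u \<and> gamma n u x = 1"
    using top_beamD[OF assms(1)] gamma_line[of u n x] assms(2) by auto
qed

lemma sum_served:
  assumes "x \<in> states n"
  shows "(\<Sum>u\<in>{1..n}. if 1 \<le> x u then gamma n u x * h u else 0) =
     (if x = idle then 0 else (h (top_beam n x) :: real))"
proof -
  have "(\<Sum>u\<in>{1..n}. if 1 \<le> x u then gamma n u x * h u else 0) =
        (\<Sum>u\<in>{1..n}. if x \<noteq> idle \<and> u = top_beam n x then h u else 0)"
  proof (intro sum.cong refl)
    fix u assume "u \<in> {1..n}"
    then show "(if 1 \<le> x u then gamma n u x * h u else 0) = (if x \<noteq> idle \<and> u = top_beam n x then h u else 0)"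
      using served_iff_top_beam[OF assms] gamma_0_or_1[of n u x] by auto
  qed
  also have "\<dots> = (if x = idle then 0 else h (top_beam n x))"
    using top_beamD[OF assms] by (auto simp: sum.delta)
  finally show ?thesis .
qed

lemma bij_betw_arrive: "v \<in> {1..n} \<Longrightarrow> bij_betw (arrive v) (states n) {x\<in>states n. 1 \<le> x v}"
  unfolding bij_betw_def
proof
  show "inj_on (arrive v) (states n)"
    by (metis depart_arrive inj_onI)
  assume v: "v \<in> {1..n}"
  show "arrive v ` states n = {x \<in> states n. 1 \<le> x v}"
  proof
    show "arrive v ` states n \<subseteq> {x \<in> states n. 1 \<le> x v}"
      using arrive_in_states[OF _ v] by (auto simp: arrive_def)
    show "{x \<in> states n. 1 \<le> x v} \<subseteq> arrive v ` states n"
    proof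
      fix x assume x: "x \<in> {x \<in> states n. 1 \<le> x v}"
      then have "x = arrive v (depart v x)"
        by (simp add: arrive_depart)
      then show "x \<in> arrive v ` states n"
        using x depart_in_states by blast
    qed
  qed
qed

lemma has_sum_arrive_iff:
  assumes "v \<in> {1..n}"
  shows "((\<lambda>y. F (arrive v y)) has_sum s) (states n) \<longleftrightarrow>
    ((\<lambda>x. if 1 \<le> x v then F x else 0) has_sum s) (states n)"
proof -
  have "((\<lambda>x. if 1 \<le> x v then F x else 0) has_sum s) (states n) \<longleftrightarrow> (F has_sum s) {x\<in>states n. 1 \<le> x v}"
    by (rule has_sum_cong_neutral) auto
  then show ?thesis
    using has_sum_reindex_bij_betw[OF bij_betw_arrive[OF assms]] by simp
qed

section \<open>Generator and stationary distributions\<close>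

locale beam_line =
  fixes n :: nat and lam r :: "nat \<Rightarrow> real"
  assumes n_pos: "1 \<le> n"
    and lam_pos: "\<And>v. v \<in> {1..n} \<Longrightarrow> 0 < lam v"
    and r_pos: "\<And>v. v \<in> {1..n} \<Longrightarrow> 0 < r v"
begin

lemma lam_nonneg: "v \<in> {1..n} \<Longrightarrow> 0 \<le> lam v"
  using lam_pos by (simp add: less_imp_le)

lemma r_nonneg: "v \<in> {1..n} \<Longrightarrow> 0 \<le> r v"
  using r_pos by (simp add: less_imp_le)

lemma service_rate_nonneg: "v \<in> {1..n} \<Longrightarrow> 0 \<le> r v * gamma n v x"
  using r_nonneg gamma_nonneg by simp

text \<open>With \<open>q = rate n lam r\<close>: \<open>succ_sum f x = (\<Sum>y. q x y * f y)\<close>, \<open>gen\<close> is the generator, and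
  \<open>inflow \<mu> x = (\<Sum>y. \<mu> y * q y x)\<close> (see \<open>sum_nbhd_rate\<close> and \<open>sum_nbhd_inflow\<close>).\<close>
definition out_rate :: "state \<Rightarrow> real" where
  "out_rate x = (\<Sum>v\<in>{1..n}. lam v + (if 1 \<le> x v then r v * gamma n v x else 0))"

definition succ_sum :: "(state \<Rightarrow> real) \<Rightarrow> state \<Rightarrow> real" where
  "succ_sum f x = (\<Sum>v\<in>{1..n}. lam v * f (arrive v x)
     + (if 1 \<le> x v then r v * gamma n v x * f (depart v x) else 0))"

definition gen :: "(state \<Rightarrow> real) \<Rightarrow> state \<Rightarrow> real" where
  "gen f x = succ_sum f x - out_rate x * f x"

definition inflow :: "(state \<Rightarrow> real) \<Rightarrow> state \<Rightarrow> real" where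
  "inflow \<mu> x = (\<Sum>v\<in>{1..n}. (if 1 \<le> x v then lam v * \<mu> (depart v x) else 0)
     + r v * gamma n v (arrive v x) * \<mu> (arrive v x))"

definition nbhd :: "state \<Rightarrow> state set" where
  "nbhd x = (\<lambda>v. arrive v x) ` {1..n} \<union> (\<lambda>v. depart v x) ` {v\<in>{1..n}. 1 \<le> x v}"

lemma finite_nbhd: "finite (nbhd x)"
  by (simp add: nbhd_def)

lemma nbhd_subset: "x \<in> states n \<Longrightarrow> nbhd x \<subseteq> states n - {x}"
  by (auto simp: nbhd_def arrive_in_states depart_in_states arrive_neq depart_neq)

lemma arrive_in_nbhd: "v \<in> {1..n} \<Longrightarrow> arrive v x \<in> nbhd x"
  by (auto simp: nbhd_def)

lemma depart_in_nbhd: "v \<in> {1..n} \<Longrightarrow> 1 \<le> x v \<Longrightarrow> depart v x \<in> nbhd x"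
  by (auto simp: nbhd_def)

lemma nbhdE:
  assumes "z \<in> nbhd x"
  obtains v where "v \<in> {1..n}" "z = arrive v x" | v where "v \<in> {1..n}" "1 \<le> x v" "z = depart v x"
  using assms by (auto simp: nbhd_def)

lemma rate_nonneg: "0 \<le> rate n lam r x y"
  unfolding rate_eq using lam_nonneg service_rate_nonneg by (intro sum_nonneg add_nonneg_nonneg) simp_all

lemma rate_eq_0_outside: "y \<notin> nbhd x \<Longrightarrow> rate n lam r x y = 0"
  unfolding rate_eq by (intro sum.neutral) (auto simp: nbhd_def)

lemma rate_into_eq_0_outside: "y \<notin> nbhd x \<Longrightarrow> rate n lam r y x = 0"
  unfolding rate_eq
  by (intro sum.neutral) (auto simp: nbhd_def eq_arrive_iff depart_arrive arrive_depart)

lemma sum_nbhd_rate: "(\<Sum>z\<in>nbhd x. rate n lam r x z * f z) = succ_sum f x"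
proof -
  have "(\<Sum>z\<in>nbhd x. rate n lam r x z * f z) =
      (\<Sum>v\<in>{1..n}. (if arrive v x \<in> nbhd x then lam v * f (arrive v x) else 0)
        + (if 1 \<le> x v \<and> depart v x \<in> nbhd x then r v * gamma n v x * f (depart v x) else 0))"
    unfolding rate_eq by (rule sum_delta_pairs[OF finite_nbhd])
  also have "\<dots> = succ_sum f x"
    unfolding succ_sum_def by (intro sum.cong refl) (auto simp: arrive_in_nbhd depart_in_nbhd)
  finally show ?thesis .
qed

lemma rate_into_eq:
  "rate n lam r y x =
     (\<Sum>v\<in>{1..n}. (if y = arrive v x then r v * gamma n v (arrive v x) else 0)
        + (if 1 \<le> x v \<and> y = depart v x then lam v else 0))"
  unfolding rate_eq by (intro sum.cong refl) (auto simp: eq_arrive_iff arrive_depart)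

lemma sum_nbhd_inflow: "(\<Sum>y\<in>nbhd x. \<mu> y * rate n lam r y x) = inflow \<mu> x"
proof -
  have "(\<Sum>y\<in>nbhd x. \<mu> y * rate n lam r y x) = (\<Sum>y\<in>nbhd x. rate n lam r y x * \<mu> y)"
    by (simp add: mult.commute)
  also have "\<dots> = (\<Sum>v\<in>{1..n}. (if arrive v x \<in> nbhd x then r v * gamma n v (arrive v x) * \<mu> (arrive v x) else 0)
        + (if 1 \<le> x v \<and> depart v x \<in> nbhd x then lam v * \<mu> (depart v x) else 0))"
    unfolding rate_into_eq by (rule sum_delta_pairs[OF finite_nbhd])
  also have "\<dots> = inflow \<mu> x"
    unfolding inflow_def by (intro sum.cong refl) (auto simp: arrive_in_nbhd depart_in_nbhd)
  finally show ?thesis .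
qed

lemma infsum_rate:
  assumes "x \<in> states n"
  shows "infsum (\<lambda>y. rate n lam r x y * f y) (states n - {x}) = succ_sum f x"
proof -
  have "infsum (\<lambda>y. rate n lam r x y * f y) (states n - {x}) = infsum (\<lambda>y. rate n lam r x y * f y) (nbhd x)"
    using nbhd_subset[OF assms] rate_eq_0_outside by (intro infsum_cong_neutral) auto
  then show ?thesis
    by (simp add: finite_nbhd sum_nbhd_rate)
qed

lemma infsum_inflow:
  assumes "x \<in> states n"
  shows "infsum (\<lambda>y. \<mu> y * rate n lam r y x) (states n - {x}) = inflow \<mu> x"
proof -
  have "infsum (\<lambda>y. \<mu> y * rate n lam r y x) (states n - {x}) = infsum (\<lambda>y. \<mu> y * rate n lam r y x) (nbhd x)"
    using nbhd_subset[OF assms] rate_into_eq_0_outside by (intro infsum_cong_neutral) auto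
  then show ?thesis
    by (simp add: finite_nbhd sum_nbhd_inflow)
qed

lemma succ_sum_const: "succ_sum (\<lambda>_. c) x = c * out_rate x"
  unfolding succ_sum_def out_rate_def sum_distrib_left by (intro sum.cong) (auto simp: algebra_simps)

lemma qout_eq: "x \<in> states n \<Longrightarrow> qout n lam r x = out_rate x"
  unfolding qout_def using infsum_rate[of x "\<lambda>_. 1"] by (simp add: succ_sum_const)

lemma out_rate_eq_sum_nbhd: "out_rate x = (\<Sum>z\<in>nbhd x. rate n lam r x z)"
  using sum_nbhd_rate[of x "\<lambda>_. 1"] by (simp add: succ_sum_const)

lemma succ_sum_cmult: "succ_sum (\<lambda>z. c * f z) x = c * succ_sum f x"
  unfolding sum_nbhd_rate[symmetric] by (simp add: sum_distrib_left algebra_simps)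

lemma succ_sum_sum: "succ_sum (\<lambda>z. \<Sum>j\<in>A. f j z) x = (\<Sum>j\<in>A. succ_sum (f j) x)"
  unfolding sum_nbhd_rate[symmetric] sum_distrib_left by (rule sum.swap)

lemma succ_sum_mono: "(\<And>z. z \<in> nbhd x \<Longrightarrow> f z \<le> g z) \<Longrightarrow> succ_sum f x \<le> succ_sum g x"
  unfolding sum_nbhd_rate[symmetric] by (intro sum_mono mult_left_mono rate_nonneg)

lemma succ_sum_nonneg: "(\<And>z. 0 \<le> f z) \<Longrightarrow> 0 \<le> succ_sum f x"
  unfolding sum_nbhd_rate[symmetric] by (intro sum_nonneg mult_nonneg_nonneg rate_nonneg)

lemma succ_sum_ge_arrival:
  assumes "\<And>z. 0 \<le> f z" "v \<in> {1..n}"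
  shows "lam v * f (arrive v x) \<le> succ_sum f x"
proof -
  have "lam v * f (arrive v x) \<le> lam v * f (arrive v x) + (if 1 \<le> x v then r v * gamma n v x * f (depart v x) else 0)"
    using assms service_rate_nonneg[OF assms(2), of x] by simp
  also have "\<dots> \<le> succ_sum f x"
    unfolding succ_sum_def using assms lam_nonneg service_rate_nonneg
    by (intro member_le_sum[where f="\<lambda>v. lam v * f (arrive v x) + (if 1 \<le> x v then r v * gamma n v x * f (depart v x) else 0)"])
       (auto intro!: add_nonneg_nonneg)
  finally show ?thesis .
qed

lemma gen_eq_sum_nbhd: "gen f x = (\<Sum>z\<in>nbhd x. rate n lam r x z * (f z - f x))"
  unfolding gen_def sum_nbhd_rate[symmetric] out_rate_eq_sum_nbhd
  by (simp add: right_diff_distrib sum_subtractf sum_distrib_right)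

lemma gen_mono_increments:
  "(\<And>z. z \<in> nbhd x \<Longrightarrow> f z - f x \<le> g z - g x) \<Longrightarrow> gen f x \<le> gen g x"
  unfolding gen_eq_sum_nbhd by (intro sum_mono mult_left_mono rate_nonneg)

lemma gen_nonpos: "(\<And>z. z \<in> nbhd x \<Longrightarrow> f z \<le> f x) \<Longrightarrow> gen f x \<le> 0"
  unfolding gen_eq_sum_nbhd by (intro sum_nonpos mult_nonneg_nonpos rate_nonneg) simp

lemma gen_affine: "gen (\<lambda>z. a * f z + b * g z + c) x = a * gen f x + b * gen g x"
proof -
  have "rate n lam r x z * ((a * f z + b * g z + c) - (a * f x + b * g x + c))
      = a * (rate n lam r x z * (f z - f x)) + b * (rate n lam r x z * (g z - g x))" for z
    by (simp add: algebra_simps)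
  then show ?thesis
    unfolding gen_eq_sum_nbhd by (simp add: sum.distrib sum_distrib_left)
qed

lemma gen_eq: "gen f x = (\<Sum>v\<in>{1..n}. lam v * (f (arrive v x) - f x)
    + (if 1 \<le> x v then r v * gamma n v x * (f (depart v x) - f x) else 0))"
  unfolding gen_def succ_sum_def out_rate_def sum_distrib_right sum_subtractf[symmetric]
  by (intro sum.cong refl) (auto simp: algebra_simps)

lemma gen_weighted:
  assumes "x \<in> states n"
  shows "gen (\<lambda>y. \<phi> (weighted a n y)) x =
      (\<Sum>v\<in>{1..n}. lam v * (\<phi> (weighted a n x + a v) - \<phi> (weighted a n x)))
    + (if x = idle then 0
       else r (top_beam n x) * (\<phi> (weighted a n x - a (top_beam n x)) - \<phi> (weighted a n x)))"
proof -
  have "gen (\<lambda>y. \<phi> (weighted a n y)) x =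
      (\<Sum>v\<in>{1..n}. lam v * (\<phi> (weighted a n x + a v) - \<phi> (weighted a n x)))
    + (\<Sum>v\<in>{1..n}. if 1 \<le> x v
        then gamma n v x * (r v * (\<phi> (weighted a n x - a v) - \<phi> (weighted a n x))) else 0)"
    unfolding gen_eq sum.distrib
    by (intro arg_cong2[where f="(+)"] sum.cong refl) (auto simp: weighted_arrive weighted_depart)
  also have "\<dots> = (\<Sum>v\<in>{1..n}. lam v * (\<phi> (weighted a n x + a v) - \<phi> (weighted a n x)))
    + (if x = idle then 0
       else r (top_beam n x) * (\<phi> (weighted a n x - a (top_beam n x)) - \<phi> (weighted a n x)))"
    by (subst sum_served[OF assms]) simp
  finally show ?thesis .
qed

lemma inflow_nonneg: "(\<And>y. 0 \<le> \<mu> y) \<Longrightarrow> 0 \<le> inflow \<mu> x"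
  unfolding sum_nbhd_inflow[symmetric] by (intro sum_nonneg mult_nonneg_nonneg rate_nonneg)

lemma inflow_sum: "inflow (\<lambda>y. \<Sum>k\<in>A. f k y) x = (\<Sum>k\<in>A. inflow (f k) x)"
  unfolding sum_nbhd_inflow[symmetric] sum_distrib_right by (rule sum.swap)

lemma inflow_cmult: "inflow (\<lambda>y. c * f y) x = c * inflow f x"
  unfolding sum_nbhd_inflow[symmetric] by (simp add: sum_distrib_left algebra_simps)

lemma inflow_tendsto:
  "(\<And>y. (\<lambda>j. f j y) \<longlonglongrightarrow> g y) \<Longrightarrow> (\<lambda>j. inflow (f j) x) \<longlonglongrightarrow> inflow g x"
  unfolding sum_nbhd_inflow[symmetric] by (intro tendsto_sum tendsto_mult_right)

lemma inflow_pairing: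
  assumes arr: "\<And>v. v \<in> {1..n} \<Longrightarrow> (\<lambda>y. \<mu> y * g (arrive v y)) summable_on states n"
    and dep: "\<And>v. v \<in> {1..n} \<Longrightarrow>
      (\<lambda>y. if 1 \<le> y v then gamma n v y * \<mu> y * g (depart v y) else 0) summable_on states n"
  obtains s where "((\<lambda>x. g x * inflow \<mu> x) has_sum s) (states n)"
    and "((\<lambda>y. \<mu> y * succ_sum g y) has_sum s) (states n)"
proof -
  define a where "a v = infsum (\<lambda>y. \<mu> y * g (arrive v y)) (states n)" for v
  define b where "b v = infsum (\<lambda>y. if 1 \<le> y v then gamma n v y * \<mu> y * g (depart v y) else 0) (states n)" for v
  have a: "((\<lambda>y. \<mu> y * g (arrive v y)) has_sum a v) (states n)" if "v \<in> {1..n}" for v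
    unfolding a_def using arr[OF that] by (rule has_sum_infsum)
  have b: "((\<lambda>y. if 1 \<le> y v then gamma n v y * \<mu> y * g (depart v y) else 0) has_sum b v) (states n)"
    if "v \<in> {1..n}" for v
    unfolding b_def using dep[OF that] by (rule has_sum_infsum)
  have a': "((\<lambda>x. if 1 \<le> x v then g x * \<mu> (depart v x) else 0) has_sum a v) (states n)"
    if v: "v \<in> {1..n}" for v
    using a[OF v] has_sum_arrive_iff[OF v, of "\<lambda>x. g x * \<mu> (depart v x)"] by (simp add: mult.commute)
  have b': "((\<lambda>x. gamma n v (arrive v x) * \<mu> (arrive v x) * g x) has_sum b v) (states n)"
    if v: "v \<in> {1..n}" for v
    using b[OF v] has_sum_arrive_iff[OF v, of "\<lambda>y. gamma n v y * \<mu> y * g (depart v y)"] by simp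
  have "((\<lambda>x. \<Sum>v\<in>{1..n}. lam v * (if 1 \<le> x v then g x * \<mu> (depart v x) else 0)
      + r v * (gamma n v (arrive v x) * \<mu> (arrive v x) * g x)) has_sum (\<Sum>v\<in>{1..n}. lam v * a v + r v * b v)) (states n)"
    using a' b' by (intro has_sum_sum has_sum_add has_sum_cmult_right) auto
  moreover have "(\<lambda>x. \<Sum>v\<in>{1..n}. lam v * (if 1 \<le> x v then g x * \<mu> (depart v x) else 0)
      + r v * (gamma n v (arrive v x) * \<mu> (arrive v x) * g x)) = (\<lambda>x. g x * inflow \<mu> x)"
    unfolding inflow_def sum_distrib_left by (intro ext sum.cong) (auto simp: algebra_simps)
  moreover have "((\<lambda>y. \<Sum>v\<in>{1..n}. lam v * (\<mu> y * g (arrive v y))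
      + r v * (if 1 \<le> y v then gamma n v y * \<mu> y * g (depart v y) else 0))
      has_sum (\<Sum>v\<in>{1..n}. lam v * a v + r v * b v)) (states n)"
    using a b by (intro has_sum_sum has_sum_add has_sum_cmult_right) auto
  moreover have "(\<lambda>y. \<Sum>v\<in>{1..n}. lam v * (\<mu> y * g (arrive v y))
      + r v * (if 1 \<le> y v then gamma n v y * \<mu> y * g (depart v y) else 0)) = (\<lambda>y. \<mu> y * succ_sum g y)"
    unfolding succ_sum_def sum_distrib_left by (intro ext sum.cong) (auto simp: algebra_simps)
  ultimately show thesis
    using that by metis
qed

lemma stationary_nonneg: "stationary n lam r \<pi> \<Longrightarrow> 0 \<le> \<pi> y"
  unfolding stationary_def by auto

lemma stationary_has_sum: "stationary n lam r \<pi> \<Longrightarrow> (\<pi> has_sum 1) (states n)"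
  unfolding stationary_def by auto

lemma stationary_balance: "stationary n lam r \<pi> \<Longrightarrow> x \<in> states n \<Longrightarrow> \<pi> x * out_rate x = inflow \<pi> x"
  unfolding stationary_def by (simp add: qout_eq infsum_inflow)

text \<open>By \<open>inflow_pairing\<close>, \<open>\<Sum>x. g x * inflow \<pi> x = (\<Sum>y. \<pi> y * succ_sum g y)\<close>, and global balance
  turns the left-hand side into \<open>\<Sum>y. \<pi> y * out_rate y * g y\<close>.\<close>
lemma stationary_has_sum_gen:
  assumes st: "stationary n lam r \<pi>" and G: "(\<lambda>y. \<pi> y * G y) summable_on states n"
    and bound_arrive: "\<And>y v. y \<in> states n \<Longrightarrow> v \<in> {1..n} \<Longrightarrow> \<bar>g (arrive v y)\<bar> \<le> G y"
    and bound_depart: "\<And>y v. y \<in> states n \<Longrightarrow> v \<in> {1..n} \<Longrightarrow> 1 \<le> y v \<Longrightarrow> \<bar>g (depart v y)\<bar> \<le> G y"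
  shows "((\<lambda>y. \<pi> y * gen g y) has_sum 0) (states n)"
proof -
  note \<pi>_nonneg = stationary_nonneg[OF st]
  have arr: "(\<lambda>y. \<pi> y * g (arrive v y)) summable_on states n" if v: "v \<in> {1..n}" for v
  proof (rule summable_on_real_bound[OF G])
    fix y assume "y \<in> states n"
    then show "\<bar>\<pi> y * g (arrive v y)\<bar> \<le> \<pi> y * G y"
      using \<pi>_nonneg[of y] bound_arrive[of y v] v by (simp add: abs_mult mult_left_mono)
  qed
  have dep: "(\<lambda>y. if 1 \<le> y v then gamma n v y * \<pi> y * g (depart v y) else 0) summable_on states n"
    if v: "v \<in> {1..n}" for v
  proof (rule summable_on_real_bound[OF G])
    fix y assume y: "y \<in> states n"
    show "\<bar>if 1 \<le> y v then gamma n v y * \<pi> y * g (depart v y) else 0\<bar> \<le> \<pi> y * G y"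
    proof (cases "1 \<le> y v")
      case True
      have "\<bar>gamma n v y * \<pi> y * g (depart v y)\<bar> = gamma n v y * (\<pi> y * \<bar>g (depart v y)\<bar>)"
        using \<pi>_nonneg[of y] gamma_nonneg[of n v y] by (simp add: abs_mult)
      also have "\<dots> \<le> 1 * (\<pi> y * G y)"
        using \<pi>_nonneg[of y] gamma_nonneg[of n v y] gamma_le_1[of n v y] bound_depart[OF y v True]
        by (intro mult_mono mult_left_mono) auto
      finally show ?thesis
        using True by simp
    next
      case False
      then show ?thesis
        using \<pi>_nonneg[of y] bound_arrive[OF y v] by (simp add: order_trans[OF abs_ge_zero])
    qed
  qed
  obtain s where inflow: "((\<lambda>x. g x * inflow \<pi> x) has_sum s) (states n)"
    and succ: "((\<lambda>y. \<pi> y * succ_sum g y) has_sum s) (states n)"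
    using inflow_pairing[OF arr dep] .
  have "((\<lambda>y. \<pi> y * out_rate y * g y) has_sum s) (states n)"
    using inflow by (rule has_sum_cong[THEN iffD1, rotated])
      (simp add: stationary_balance[OF st] mult.commute)
  from has_sum_diff[OF succ this] show ?thesis
    unfolding gen_def by (simp add: algebra_simps)
qed

end

section \<open>Moments of the workload\<close>

lemma summable_on_by_truncation:
  fixes f w :: "'a \<Rightarrow> real"
  assumes nonneg: "\<And>y. y \<in> A \<Longrightarrow> 0 \<le> f y"
    and trunc: "\<And>M. 0 \<le> M \<Longrightarrow> (\<lambda>y. if w y < M then f y else 0) summable_on A \<and>
      infsum (\<lambda>y. if w y < M then f y else 0) A \<le> B"
  shows "f summable_on A" "infsum f A \<le> B"
proof -
  have finite_sums: "sum f F \<le> B" if F: "finite F" "F \<subseteq> A" for F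
  proof -
    define M where "M = Max (insert 0 (w ` F)) + 1"
    have M: "0 \<le> M"
      unfolding M_def using F by (simp add: le_max_iff_disj)
    have below: "w y < M" if "y \<in> F" for y
    proof -
      have "w y \<le> Max (insert 0 (w ` F))"
        using F that by (intro Max_ge) auto
      then show ?thesis
        unfolding M_def by simp
    qed
    have "sum f F = sum (\<lambda>y. if w y < M then f y else 0) F"
      using below by (intro sum.cong) auto
    also have "\<dots> \<le> infsum (\<lambda>y. if w y < M then f y else 0) A"
      using trunc[OF M] F nonneg by (intro finite_sum_le_infsum) auto
    also have "\<dots> \<le> B"
      using trunc[OF M] by blast
    finally show ?thesis .
  qed
  show summable: "f summable_on A"
    using nonneg finite_sums by (intro nonneg_bdd_above_summable_on bdd_aboveI) auto
  show "infsum f A \<le> B"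
    using summable finite_sums by (rule infsum_le_finite_sums)
qed

context beam_line
begin

text \<open>\<open>work x\<close> is the expected remaining service time in state \<open>x\<close>, and \<open>load\<close> is the
  \<open>\<Sum>v. \<rho> v\<close> of the theorem; the \<open>tail_\<close> variants only count beams \<open>\<ge> v\<close>.\<close>
definition inv_r :: "nat \<Rightarrow> real" where
  "inv_r u = 1 / r u"

definition tail_work :: "nat \<Rightarrow> state \<Rightarrow> real" where
  "tail_work v = weighted (\<lambda>u. if v \<le> u then inv_r u else 0) n"

definition tail_load :: "nat \<Rightarrow> real" where
  "tail_load v = (\<Sum>u\<in>{v..n}. lam u * inv_r u)"

definition tail_load2 :: "nat \<Rightarrow> real" where
  "tail_load2 v = (\<Sum>u\<in>{v..n}. lam u * inv_r u ^ 2)"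

definition work :: "state \<Rightarrow> real" where
  "work = weighted inv_r n"

definition load :: real where
  "load = (\<Sum>u\<in>{1..n}. lam u * inv_r u)"

definition load2 :: real where
  "load2 = (\<Sum>u\<in>{1..n}. lam u * inv_r u ^ 2)"

definition load3 :: real where
  "load3 = (\<Sum>u\<in>{1..n}. lam u * inv_r u ^ 3)"

definition inv_r_sum :: real where
  "inv_r_sum = (\<Sum>u\<in>{1..n}. inv_r u)"

lemma inv_r_pos: "u \<in> {1..n} \<Longrightarrow> 0 < inv_r u"
  using r_pos by (simp add: inv_r_def)

lemma r_inv_r: "u \<in> {1..n} \<Longrightarrow> r u * inv_r u = 1"
  using r_pos[of u] by (simp add: inv_r_def)

lemma inv_r_le_sum: "u \<in> {1..n} \<Longrightarrow> inv_r u \<le> inv_r_sum"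
  unfolding inv_r_sum_def using inv_r_pos by (intro member_le_sum) (auto simp: less_imp_le)

lemma inv_r_sum_nonneg: "0 \<le> inv_r_sum"
  using inv_r_le_sum[of 1] inv_r_pos[of 1] n_pos by simp

lemma lam_inv_r_power_nonneg: "u \<in> {1..n} \<Longrightarrow> 0 \<le> lam u * inv_r u ^ k"
  using lam_nonneg inv_r_pos by (simp add: less_imp_le)

lemma tail_load2_nonneg: "1 \<le> v \<Longrightarrow> 0 \<le> tail_load2 v"
  unfolding tail_load2_def using lam_inv_r_power_nonneg[where k=2] by (intro sum_nonneg) auto

lemma load3_nonneg: "0 \<le> load3"
  unfolding load3_def using lam_inv_r_power_nonneg[where k=3] by (intro sum_nonneg) auto

lemma tail_load_1: "tail_load 1 = load"
  by (simp add: tail_load_def load_def)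

lemma tail_load2_1: "tail_load2 1 = load2"
  by (simp add: tail_load2_def load2_def)

lemma tail_work_1: "tail_work 1 = work"
  unfolding tail_work_def work_def weighted_def by (intro ext sum.cong) auto

lemma tail_load_le_load: "1 \<le> v \<Longrightarrow> tail_load v \<le> load"
  unfolding tail_load_def load_def using lam_inv_r_power_nonneg[where k=1] by (intro sum_mono2) auto

lemma load_nonneg: "0 \<le> load"
  unfolding load_def using lam_inv_r_power_nonneg[where k=1] by (intro sum_nonneg) auto

lemma load2_nonneg: "0 \<le> load2"
  unfolding load2_def using lam_inv_r_power_nonneg[where k=2] by (intro sum_nonneg) auto

lemma tail_work_nonneg: "0 \<le> tail_work v y"
  unfolding tail_work_def weighted_def using inv_r_pos by (intro sum_nonneg) (auto simp: less_imp_le)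

lemma tail_work_le_work: "tail_work v y \<le> work y"
  unfolding tail_work_def work_def weighted_def using inv_r_pos by (intro sum_mono) (auto simp: less_imp_le)

lemma work_nonneg: "0 \<le> work y"
  unfolding work_def weighted_def using inv_r_pos by (intro sum_nonneg) (auto simp: less_imp_le)

lemma work_idle: "work idle = 0"
  by (simp add: work_def weighted_def)

lemma work_arrive: "u \<in> {1..n} \<Longrightarrow> work (arrive u y) = work y + inv_r u"
  unfolding work_def by (rule weighted_arrive)

lemma work_depart: "u \<in> {1..n} \<Longrightarrow> 1 \<le> y u \<Longrightarrow> work (depart u y) = work y - inv_r u"
  unfolding work_def by (rule weighted_depart)

lemma work_nbhd_le: "z \<in> nbhd y \<Longrightarrow> work z \<le> work y + inv_r_sum"
proof (erule nbhdE)
  fix u assume "u \<in> {1..n}" "z = arrive u y"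
  then show ?thesis
    using inv_r_le_sum by (simp add: work_arrive)
next
  fix u assume "u \<in> {1..n}" "1 \<le> y u" "z = depart u y"
  then show ?thesis
    using inv_r_pos[of u] inv_r_sum_nonneg by (simp add: work_depart)
qed

lemma count_le_work: "w \<in> {1..n} \<Longrightarrow> real (y w) \<le> r w * work y"
proof -
  assume w: "w \<in> {1..n}"
  have "inv_r w * real (y w) \<le> work y"
    unfolding work_def weighted_def using w inv_r_pos
    by (intro member_le_sum[where f="\<lambda>u. inv_r u * real (y u)"]) (auto simp: less_imp_le)
  then have "r w * (inv_r w * real (y w)) \<le> r w * work y"
    using r_nonneg[OF w] by (rule mult_left_mono)
  then show ?thesis
    using r_inv_r[OF w] by (simp add: mult.assoc[symmetric])
qed

lemma tail_work_eq_0: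
  assumes "y \<in> states n" "\<not> (y \<noteq> idle \<and> v \<le> top_beam n y)"
  shows "tail_work v y = 0"
  unfolding tail_work_def weighted_def
proof (intro sum.neutral ballI)
  fix u assume u: "u \<in> {1..n}"
  show "(if v \<le> u then inv_r u else 0) * real (y u) = 0"
  proof (cases "v \<le> u \<and> y \<noteq> idle")
    case True
    then have "y u = 0"
      using assms u top_beamD(3)[OF assms(1)] by auto
    then show ?thesis
      by simp
  qed auto
qed

lemma gen_work: "y \<in> states n \<Longrightarrow> gen work y = load - (if y = idle then 0 else 1)"
  using gen_weighted[of y id inv_r] r_inv_r top_beamD[of y n]
  by (auto simp: work_def load_def)

lemma gen_tail_work_sq:
  assumes y: "y \<in> states n" and v: "v \<in> {1..n}"
  shows "gen (\<lambda>z. tail_work v z ^ 2) y = 2 * tail_work v y * (tail_load v - 1) + tail_load2 v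
      + (if y \<noteq> idle \<and> v \<le> top_beam n y then inv_r (top_beam n y) else 0)"
proof -
  define t where "t = top_beam n y"
  define a where "a u = (if v \<le> u then inv_r u else 0)" for u
  have arrivals: "(\<Sum>u\<in>{1..n}. lam u * ((tail_work v y + a u)^2 - (tail_work v y)^2))
      = 2 * tail_work v y * tail_load v + tail_load2 v"
  proof -
    have "(\<Sum>u\<in>{1..n}. lam u * ((tail_work v y + a u)^2 - (tail_work v y)^2))
        = (\<Sum>u\<in>{1..n}. if u \<in> {v..n} then 2 * tail_work v y * (lam u * inv_r u) + lam u * inv_r u ^ 2 else 0)"
      by (intro sum.cong) (auto simp: a_def power2_eq_square algebra_simps)
    also have "\<dots> = (\<Sum>u\<in>{v..n}. 2 * tail_work v y * (lam u * inv_r u) + lam u * inv_r u ^ 2)"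
      using v by (subst sum.inter_restrict[symmetric]) (auto intro: sum.cong)
    finally show ?thesis
      by (simp add: tail_load_def tail_load2_def sum.distrib sum_distrib_left)
  qed
  have service: "(if y = idle then 0 else r t * ((tail_work v y - a t)^2 - (tail_work v y)^2))
      = (if y \<noteq> idle \<and> v \<le> t then inv_r t else 0) - 2 * tail_work v y"
  proof (cases "y \<noteq> idle \<and> v \<le> t")
    case True
    then have "t \<in> {1..n}"
      using top_beamD[OF y] t_def by auto
    moreover have "r t * ((tail_work v y - a t)^2 - (tail_work v y)^2) = (r t * inv_r t) * (inv_r t - 2 * tail_work v y)"
      using True by (simp add: a_def power2_eq_square algebra_simps)
    ultimately show ?thesis
      using True r_inv_r by simp
  next
    case False
    then show ?thesis
      using tail_work_eq_0[OF y] t_def by (auto simp: a_def)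
  qed
  have "tail_work v = weighted a n"
    by (simp add: tail_work_def a_def[abs_def])
  then have "gen (\<lambda>z. tail_work v z ^ 2) y =
      (\<Sum>u\<in>{1..n}. lam u * ((tail_work v y + a u)^2 - (tail_work v y)^2))
    + (if y = idle then 0 else r t * ((tail_work v y - a t)^2 - (tail_work v y)^2))"
    using gen_weighted[OF y, where \<phi>="\<lambda>t. t^2" and a=a] unfolding t_def by simp
  then show ?thesis
    unfolding arrivals service by (simp add: t_def algebra_simps)
qed

lemma gen_work_sq_le:
  assumes y: "y \<in> states n"
  shows "gen (\<lambda>z. work z ^ 2) y \<le> inv_r_sum + load2 - 2 * (1 - load) * work y"
proof -
  have "gen (\<lambda>z. work z ^ 2) y = 2 * work y * (load - 1) + load2
      + (if y \<noteq> idle \<and> 1 \<le> top_beam n y then inv_r (top_beam n y) else 0)"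
    using gen_tail_work_sq[OF y, of 1] n_pos unfolding tail_work_1 tail_load_1 tail_load2_1 by simp
  moreover have "(if y \<noteq> idle \<and> 1 \<le> top_beam n y then inv_r (top_beam n y) else 0) \<le> inv_r_sum"
    using inv_r_le_sum top_beamD[OF y] inv_r_sum_nonneg by auto
  ultimately show ?thesis
    by (simp add: algebra_simps)
qed

lemma gen_work_cube_le:
  assumes y: "y \<in> states n"
  shows "gen (\<lambda>z. work z ^ 3) y \<le> load3 + 3 * (inv_r_sum + load2) * work y - 3 * (1 - load) * work y ^ 2"
proof -
  define t where "t = top_beam n y"
  have gen: "gen (\<lambda>z. work z ^ 3) y =
      (\<Sum>u\<in>{1..n}. lam u * ((work y + inv_r u)^3 - work y ^ 3))
    + (if y = idle then 0 else r t * ((work y - inv_r t)^3 - work y ^ 3))"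
    using gen_weighted[OF y, where \<phi>="\<lambda>t. t^3" and a=inv_r] unfolding work_def t_def by simp
  have "(\<Sum>u\<in>{1..n}. lam u * ((work y + inv_r u)^3 - work y ^ 3))
      = (\<Sum>u\<in>{1..n}. 3 * work y ^ 2 * (lam u * inv_r u) + 3 * work y * (lam u * inv_r u ^ 2) + lam u * inv_r u ^ 3)"
    by (intro sum.cong refl) (simp add: power2_eq_square power3_eq_cube algebra_simps)
  also have "\<dots> = 3 * work y ^ 2 * load + 3 * work y * load2 + load3"
    unfolding load_def load2_def load3_def by (simp add: sum.distrib sum_distrib_left)
  finally have arrivals: "(\<Sum>u\<in>{1..n}. lam u * ((work y + inv_r u)^3 - work y ^ 3))
      = 3 * work y ^ 2 * load + 3 * work y * load2 + load3" .
  have service: "r t * ((work y - inv_r t)^3 - work y ^ 3) \<le> - 3 * work y ^ 2 + 3 * work y * inv_r_sum"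
    if "y \<noteq> idle"
  proof -
    have t: "t \<in> {1..n}"
      using top_beamD[OF y that] t_def by auto
    have "r t * ((work y - inv_r t)^3 - work y ^ 3)
        = (r t * inv_r t) * (- 3 * work y ^ 2 + 3 * work y * inv_r t - inv_r t ^ 2)"
      by (simp add: power2_eq_square power3_eq_cube algebra_simps)
    also have "\<dots> = - 3 * work y ^ 2 + 3 * work y * inv_r t - inv_r t ^ 2"
      using r_inv_r[OF t] by simp
    also have "\<dots> \<le> - 3 * work y ^ 2 + 3 * work y * inv_r_sum"
      using mult_left_mono[OF inv_r_le_sum[OF t], of "3 * work y"] work_nonneg[of y]
        zero_le_power2[of "inv_r t"] by linarith
    finally show ?thesis .
  qed
  show ?thesis
  proof (cases "y = idle")
    case True
    then show ?thesis
      using gen arrivals by (simp add: work_idle)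
  next
    case False
    then show ?thesis
      using gen arrivals service by (simp add: algebra_simps)
  qed
qed

lemma gen_truncated_le:
  assumes \<psi>: "mono_on {0..} \<psi>" and M: "0 \<le> M"
  shows "gen (\<lambda>z. \<psi> (min (work z) M)) y \<le> (if work y < M then gen (\<lambda>z. \<psi> (work z)) y else 0)"
proof (cases "work y < M")
  case True
  have "\<psi> (min (work z) M) \<le> \<psi> (work z)" for z
    using work_nonneg[of z] M by (intro mono_onD[OF \<psi>]) auto
  then have "gen (\<lambda>z. \<psi> (min (work z) M)) y \<le> gen (\<lambda>z. \<psi> (work z)) y"
    using True by (intro gen_mono_increments) simp
  then show ?thesis
    using True by simp
next
  case False
  have "\<psi> (min (work z) M) \<le> \<psi> (min (work y) M)" for z
    using work_nonneg[of z] M False by (intro mono_onD[OF \<psi>]) auto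
  then show ?thesis
    using False by (simp add: gen_nonpos)
qed

lemma gen_truncated_power_le:
  assumes M: "0 \<le> M" and drift: "gen (\<lambda>z. work z ^ Suc p) y \<le> a y - c * work y ^ p"
  shows "gen (\<lambda>z. min (work z) M ^ Suc p) y \<le> (if work y < M then a y - c * work y ^ p else 0)"
proof -
  have "mono_on {0..} (\<lambda>t::real. t ^ Suc p)"
    by (intro mono_onI power_mono) auto
  from gen_truncated_le[OF this M]
  have le: "gen (\<lambda>z. min (work z) M ^ Suc p) y \<le> (if work y < M then gen (\<lambda>z. work z ^ Suc p) y else 0)" .
  show ?thesis
  proof (cases "work y < M")
    case True
    then have "gen (\<lambda>z. min (work z) M ^ Suc p) y \<le> gen (\<lambda>z. work z ^ Suc p) y"
      using le by simp
    also have "\<dots> \<le> a y - c * work y ^ p"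
      by (rule drift)
    finally show ?thesis
      using True by simp
  next
    case False
    then show ?thesis
      using le by simp
  qed
qed

text \<open>The truncated test function \<open>min (work z) M ^ Suc p\<close> is bounded, so its generator has
  stationary mean zero; letting \<open>M\<close> grow transfers the drift bound to the moment of order \<open>p\<close>.\<close>
lemma stationary_truncated_work_moment:
  assumes st: "stationary n lam r \<pi>" and c: "0 < c" and M: "0 \<le> M"
    and drift: "\<And>y. y \<in> states n \<Longrightarrow> gen (\<lambda>z. work z ^ Suc p) y \<le> a y - c * work y ^ p"
    and a_nonneg: "\<And>y. 0 \<le> a y" and a_sum: "((\<lambda>y. \<pi> y * a y) has_sum A) (states n)"
  defines "T \<equiv> \<lambda>y. if work y < M then \<pi> y * work y ^ p else 0"
  shows "T summable_on states n \<and> infsum T (states n) \<le> A / c"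
proof -
  let ?I = "\<lambda>y. if work y < M then \<pi> y * a y else 0"
  note \<pi>_nonneg = stationary_nonneg[OF st]
  have \<pi>_summable: "\<pi> summable_on states n"
    using stationary_has_sum[OF st] by (rule has_sum_imp_summable)
  have bound: "\<bar>min (work z) M ^ Suc p\<bar> \<le> M ^ Suc p" for z
  proof -
    have "0 \<le> min (work z) M" "min (work z) M \<le> M"
      using work_nonneg[of z] M by auto
    then show ?thesis
      by (metis abs_of_nonneg power_mono zero_le_power)
  qed
  have zero: "((\<lambda>y. \<pi> y * gen (\<lambda>z. min (work z) M ^ Suc p) y) has_sum 0) (states n)"
    using bound by (intro stationary_has_sum_gen[OF st summable_on_cmult_left[OF \<pi>_summable]])
  have pointwise: "\<pi> y * gen (\<lambda>z. min (work z) M ^ Suc p) y \<le> ?I y - c * T y" if y: "y \<in> states n" for y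
  proof -
    have "\<pi> y * gen (\<lambda>z. min (work z) M ^ Suc p) y \<le> \<pi> y * (if work y < M then a y - c * work y ^ p else 0)"
      by (rule mult_left_mono[OF gen_truncated_power_le[where a=a and c=c, OF M drift[OF y]] \<pi>_nonneg])
    also have "\<dots> = ?I y - c * T y"
      by (simp add: T_def algebra_simps)
    finally show ?thesis .
  qed
  have T: "T summable_on states n"
  proof (rule summable_on_real_bound[OF summable_on_cmult_left[OF \<pi>_summable, of "M ^ p"]])
    fix y
    have "work y ^ p \<le> M ^ p" if "work y < M"
      using that work_nonneg[of y] by (intro power_mono) auto
    then show "\<bar>T y\<bar> \<le> \<pi> y * M ^ p"
      using \<pi>_nonneg[of y] work_nonneg[of y] M by (simp add: T_def abs_mult mult_left_mono)
  qed
  have I: "?I summable_on states n"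
    using \<pi>_nonneg a_nonneg
    by (intro summable_on_real_bound[OF has_sum_imp_summable[OF a_sum]]) auto
  have "0 \<le> infsum ?I (states n) - c * infsum T (states n)"
    using has_sum_mono[OF zero has_sum_diff[OF has_sum_infsum[OF I] has_sum_cmult_right[OF has_sum_infsum[OF T]]]]
      pointwise by blast
  moreover have "infsum ?I (states n) \<le> A"
    using infsum_mono[OF I has_sum_imp_summable[OF a_sum]] \<pi>_nonneg a_nonneg infsumI[OF a_sum]
    by (simp add: mult_nonneg_nonneg)
  ultimately show ?thesis
    using T c by (simp add: field_simps)
qed

lemma stationary_work_moment:
  assumes st: "stationary n lam r \<pi>" and c: "0 < c"
    and drift: "\<And>y. y \<in> states n \<Longrightarrow> gen (\<lambda>z. work z ^ Suc p) y \<le> a y - c * work y ^ p"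
    and a_nonneg: "\<And>y. 0 \<le> a y" and a_sum: "((\<lambda>y. \<pi> y * a y) has_sum A) (states n)"
  shows "(\<lambda>y. \<pi> y * work y ^ p) summable_on states n"
    "infsum (\<lambda>y. \<pi> y * work y ^ p) (states n) \<le> A / c"
  using summable_on_by_truncation[where w=work, OF _ stationary_truncated_work_moment[OF st c _ drift a_nonneg a_sum]]
    stationary_nonneg[OF st] work_nonneg by auto

definition work_bound :: real where
  "work_bound = (inv_r_sum + load2) / (2 * (1 - load))"

lemma work_bound_nonneg: "load < 1 \<Longrightarrow> 0 \<le> work_bound"
  unfolding work_bound_def using inv_r_sum_nonneg load2_nonneg by simp

lemma stationary_mean_work:
  assumes st: "stationary n lam r \<pi>" and load: "load < 1"
  shows "(\<lambda>y. \<pi> y * work y) summable_on states n" "infsum (\<lambda>y. \<pi> y * work y) (states n) \<le> work_bound"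
proof -
  have drift: "gen (\<lambda>z. work z ^ Suc 1) y \<le> (inv_r_sum + load2) - 2 * (1 - load) * work y ^ 1"
    if "y \<in> states n" for y
    using gen_work_sq_le[OF that] by (simp only: Suc_1 power_one_right)
  have "((\<lambda>y. \<pi> y * (inv_r_sum + load2)) has_sum (inv_r_sum + load2)) (states n)"
    using has_sum_cmult_left[OF stationary_has_sum[OF st]] by simp
  note moment = stationary_work_moment[OF st _ drift _ this]
  show "(\<lambda>y. \<pi> y * work y) summable_on states n" "infsum (\<lambda>y. \<pi> y * work y) (states n) \<le> work_bound"
    using moment load inv_r_sum_nonneg load2_nonneg by (simp_all add: work_bound_def)
qed

lemma stationary_work_sq_summable:
  assumes st: "stationary n lam r \<pi>" and load: "load < 1"
  shows "(\<lambda>y. \<pi> y * work y ^ 2) summable_on states n"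
proof -
  define a where "a y = load3 + 3 * (inv_r_sum + load2) * work y" for y
  have drift: "gen (\<lambda>z. work z ^ Suc 2) y \<le> a y - 3 * (1 - load) * work y ^ 2"
    if "y \<in> states n" for y
    using gen_work_cube_le[OF that] by (simp add: a_def)
  have a_nonneg: "0 \<le> a y" for y
    unfolding a_def using load3_nonneg inv_r_sum_nonneg load2_nonneg work_nonneg[of y] by simp
  have "((\<lambda>y. load3 * \<pi> y + 3 * (inv_r_sum + load2) * (\<pi> y * work y)) has_sum
      (load3 * 1 + 3 * (inv_r_sum + load2) * infsum (\<lambda>y. \<pi> y * work y) (states n))) (states n)"
    using stationary_has_sum[OF st] has_sum_infsum[OF stationary_mean_work(1)[OF st load]]
    by (intro has_sum_add has_sum_cmult_right)
  then have "((\<lambda>y. \<pi> y * a y) has_sum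
      (load3 + 3 * (inv_r_sum + load2) * infsum (\<lambda>y. \<pi> y * work y) (states n))) (states n)"
    by (simp add: a_def algebra_simps)
  from stationary_work_moment(1)[OF st _ drift a_nonneg this] show ?thesis
    using load by simp
qed

lemma stationary_summable_one_plus_work_sq:
  assumes st: "stationary n lam r \<pi>" and load: "load < 1"
  shows "(\<lambda>y. \<pi> y * (1 + work y)^2) summable_on states n"
proof -
  have "(\<lambda>y. \<pi> y * (1 + work y)^2) = (\<lambda>y. (\<pi> y + 2 * (\<pi> y * work y)) + \<pi> y * work y ^ 2)"
    by (auto simp: power2_eq_square algebra_simps)
  then show ?thesis
    using has_sum_imp_summable[OF stationary_has_sum[OF st]] stationary_mean_work(1)[OF st load]
      stationary_work_sq_summable[OF st load]
    by (simp add: summable_on_add summable_on_cmult_right)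
qed

end

section \<open>Stationary mean queue lengths\<close>

lemma mean_from_tails_identity:
  fixes x b s R :: real
  assumes "0 < R" "x + s < 1" "s < 1"
  shows "R * ((x / R + b) / (1 - (x + s)) - b / (1 - s))
    = x * (1 + (R * (x / R + b) - (x + s))) / ((1 - (x + s)) * (1 - s))"
proof -
  define D1 where "D1 = 1 - (x + s)"
  define D2 where "D2 = 1 - s"
  have nonzero: "D1 \<noteq> 0" "D2 \<noteq> 0" "R \<noteq> 0"
    using assms unfolding D1_def D2_def by auto
  have "R * ((x / R + b) / D1 - b / D2) = (x + R * b) / D1 - R * b / D2"
    using nonzero by (simp add: field_simps)
  also have "\<dots> = ((x + R * b) * D2 - R * b * D1) / (D1 * D2)"
    using nonzero by (simp add: diff_frac_eq)
  also have "(x + R * b) * D2 - R * b * D1 = x * (1 + (R * (x / R + b) - (x + s)))"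
    unfolding D1_def D2_def using nonzero by (simp add: algebra_simps)
  finally show ?thesis
    unfolding D1_def D2_def .
qed

context beam_line
begin

lemma gen_count:
  assumes y: "y \<in> states n" and w: "w \<in> {1..n}"
  shows "gen (\<lambda>z. real (z w)) y = lam w - (if y \<noteq> idle \<and> top_beam n y = w then r w else 0)"
proof -
  define a where "a u = (if u = w then 1 else 0 :: real)" for u
  have count: "(\<lambda>z. real (z w)) = (\<lambda>z. weighted a n z)"
    using w by (auto simp: weighted_def a_def if_distrib[of "\<lambda>c. c * _"] sum.delta cong: if_cong)
  have "gen (\<lambda>z. weighted a n z) y = lam w - (if y \<noteq> idle \<and> top_beam n y = w then r w else 0)"
    using gen_weighted[OF y, where \<phi>="\<lambda>t. t" and a=a] w
    by (simp add: a_def if_distrib[of "\<lambda>c. _ * c"] sum.delta cong: if_cong)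
  then show ?thesis
    by (simp add: count)
qed

lemma count_summable:
  assumes st: "stationary n lam r \<pi>" and load: "load < 1" and u: "u \<in> {1..n}"
  shows "(\<lambda>y. real (y u) * \<pi> y) summable_on states n"
proof (rule summable_on_real_bound)
  show "(\<lambda>y. r u * (\<pi> y * work y)) summable_on states n"
    using stationary_mean_work(1)[OF st load] by (rule summable_on_cmult_right)
  fix y
  have "real (y u) * \<pi> y \<le> (r u * work y) * \<pi> y"
    using count_le_work[OF u] stationary_nonneg[OF st] by (intro mult_right_mono) auto
  then show "\<bar>real (y u) * \<pi> y\<bar> \<le> r u * (\<pi> y * work y)"
    using stationary_nonneg[OF st, of y] by (simp add: algebra_simps)
qed

lemma stationary_top_beam:
  assumes st: "stationary n lam r \<pi>" and load: "load < 1" and w: "w \<in> {1..n}"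
  shows "((\<lambda>y. \<pi> y * (if y \<noteq> idle \<and> top_beam n y = w then 1 else 0)) has_sum lam w / r w) (states n)"
proof -
  let ?top = "\<lambda>y. \<pi> y * (if y \<noteq> idle \<and> top_beam n y = w then 1 else 0)"
  have G: "(\<lambda>y. \<pi> y * (r w * work y + 1)) summable_on states n"
    using summable_on_add[OF summable_on_cmult_right[OF stationary_mean_work(1)[OF st load], of "r w"]
        has_sum_imp_summable[OF stationary_has_sum[OF st]]]
    by (simp add: algebra_simps)
  have "((\<lambda>y. \<pi> y * gen (\<lambda>z. real (z w)) y) has_sum 0) (states n)"
  proof (rule stationary_has_sum_gen[OF st G])
    fix y v
    show "\<bar>real (arrive v y w)\<bar> \<le> r w * work y + 1"
      using count_le_work[OF w, of y] by (auto simp: arrive_def)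
    have "depart v y w \<le> y w"
      by (simp add: depart_def)
    then show "\<bar>real (depart v y w)\<bar> \<le> r w * work y + 1"
      using count_le_work[OF w, of y] by linarith
  qed
  from has_sum_diff[OF has_sum_cmult_right[OF stationary_has_sum[OF st], of "lam w"] this]
  have "((\<lambda>y. lam w * \<pi> y - \<pi> y * gen (\<lambda>z. real (z w)) y) has_sum lam w) (states n)"
    by simp
  then have "((\<lambda>y. r w * ?top y) has_sum lam w) (states n)"
    by (rule has_sum_cong[THEN iffD1, rotated]) (simp add: gen_count[OF _ w] algebra_simps)
  from has_sum_cmult_right[OF this, of "1 / r w"] show ?thesis
    using r_pos[OF w] by simp
qed

lemma tail_work_eq_sum: "1 \<le> v \<Longrightarrow> tail_work v y = (\<Sum>u\<in>{v..n}. inv_r u * real (y u))"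
proof -
  assume v: "1 \<le> v"
  have "tail_work v y = (\<Sum>u\<in>{1..n}. if u \<in> {v..n} then inv_r u * real (y u) else 0)"
    unfolding tail_work_def weighted_def by (intro sum.cong) auto
  also have "\<dots> = (\<Sum>u\<in>{1..n} \<inter> {v..n}. inv_r u * real (y u))"
    by (rule sum.inter_restrict[symmetric]) simp
  also have "{1..n} \<inter> {v..n} = {v..n}"
    using v by auto
  finally show ?thesis .
qed

lemma has_sum_tail_work_mean_N:
  assumes st: "stationary n lam r \<pi>" and load: "load < 1" and v: "v \<in> {1..n}"
  shows "((\<lambda>y. \<pi> y * tail_work v y) has_sum (\<Sum>u\<in>{v..n}. inv_r u * mean_N n \<pi> u)) (states n)"
proof -
  have "((\<lambda>y. \<Sum>u\<in>{v..n}. inv_r u * (real (y u) * \<pi> y)) has_sum (\<Sum>u\<in>{v..n}. inv_r u * mean_N n \<pi> u)) (states n)"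
    unfolding mean_N_def using v
    by (intro has_sum_sum has_sum_cmult_right has_sum_infsum count_summable[OF st load]) auto
  then show ?thesis
    using v by (simp add: tail_work_eq_sum sum_distrib_left algebra_simps)
qed

lemma tail_service_eq_sum:
  assumes "y \<in> states n"
  shows "(if y \<noteq> idle \<and> v \<le> top_beam n y then inv_r (top_beam n y) else 0)
    = (\<Sum>w\<in>{v..n}. inv_r w * (if y \<noteq> idle \<and> top_beam n y = w then 1 else 0))"
proof (cases "y = idle")
  case False
  then have "top_beam n y \<le> n"
    using top_beamD(1)[OF assms] by auto
  then show ?thesis
    using False by (simp add: if_distrib[of "\<lambda>c. inv_r _ * c"] sum.delta' cong: if_cong)
qed simp

lemma stationary_has_sum_gen_tail_work_sq:
  assumes st: "stationary n lam r \<pi>" and load: "load < 1"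
  shows "((\<lambda>y. \<pi> y * gen (\<lambda>z. tail_work v z ^ 2) y) has_sum 0) (states n)"
proof -
  define G where "G y = (1 + inv_r_sum)^2 * (1 + work y)^2" for y
  have G: "(\<lambda>y. \<pi> y * G y) summable_on states n"
    unfolding G_def using summable_on_cmult_right[OF stationary_summable_one_plus_work_sq[OF st load], of "(1 + inv_r_sum)^2"]
    by (simp add: algebra_simps)
  have bound: "\<bar>tail_work v z ^ 2\<bar> \<le> G y" if "z \<in> nbhd y" for y z
  proof -
    have "tail_work v z \<le> (1 + inv_r_sum) * (1 + work y)"
      using tail_work_le_work[of v z] work_nbhd_le[OF that] mult_nonneg_nonneg[OF inv_r_sum_nonneg work_nonneg[of y]]
      by (simp add: algebra_simps)
    then have "tail_work v z ^ 2 \<le> ((1 + inv_r_sum) * (1 + work y)) ^ 2"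
      using tail_work_nonneg by (intro power_mono) auto
    then show ?thesis
      by (simp add: G_def power_mult_distrib)
  qed
  show ?thesis
  proof (rule stationary_has_sum_gen[OF st G])
    fix y u assume "u \<in> {1..n}"
    then show "\<bar>tail_work v (arrive u y) ^ 2\<bar> \<le> G y"
      by (intro bound arrive_in_nbhd)
  next
    fix y :: state and u assume "u \<in> {1..n}" "1 \<le> y u"
    then show "\<bar>tail_work v (depart u y) ^ 2\<bar> \<le> G y"
      by (intro bound depart_in_nbhd)
  qed
qed

text \<open>Test function \<open>tail_work v ^ 2\<close>: arrivals to beams \<open>\<ge> v\<close> raise it, and service of the top beam
  lowers it only while the top beam is \<open>\<ge> v\<close>, which has stationary probability \<open>tail_load v\<close>.\<close>
lemma stationary_mean_tail_work:
  assumes st: "stationary n lam r \<pi>" and load: "load < 1" and v: "v \<in> {1..n}"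
  shows "((\<lambda>y. \<pi> y * tail_work v y) has_sum tail_load2 v / (1 - tail_load v)) (states n)"
proof -
  let ?top = "\<lambda>w y. \<pi> y * (if y \<noteq> idle \<and> top_beam n y = w then 1 else 0)"
  define E where "E = infsum (\<lambda>y. \<pi> y * tail_work v y) (states n)"
  have E: "((\<lambda>y. \<pi> y * tail_work v y) has_sum E) (states n)"
    unfolding E_def using has_sum_tail_work_mean_N[OF st load v] by (rule has_sum_infsum[OF has_sum_imp_summable])
  have sum_top: "(\<Sum>w\<in>{v..n}. inv_r w * (lam w / r w)) = tail_load2 v"
    unfolding tail_load2_def by (intro sum.cong) (auto simp: inv_r_def power2_eq_square)
  have "((\<lambda>y. 2 * (tail_load v - 1) * (\<pi> y * tail_work v y) + tail_load2 v * \<pi> y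
      + (\<Sum>w\<in>{v..n}. inv_r w * ?top w y))
      has_sum (2 * (tail_load v - 1) * E + tail_load2 v * 1 + (\<Sum>w\<in>{v..n}. inv_r w * (lam w / r w)))) (states n)"
    using v by (intro has_sum_add has_sum_cmult_right E stationary_has_sum[OF st] has_sum_sum
        stationary_top_beam[OF st load]) auto
  then have "((\<lambda>y. \<pi> y * gen (\<lambda>z. tail_work v z ^ 2) y) has_sum
      (2 * (tail_load v - 1) * E + tail_load2 v * 1 + tail_load2 v)) (states n)"
    unfolding sum_top by (rule has_sum_cong[THEN iffD1, rotated])
      (auto simp: gen_tail_work_sq[OF _ v] tail_service_eq_sum sum_distrib_left algebra_simps)
  with stationary_has_sum_gen_tail_work_sq[OF st load] have "E * (1 - tail_load v) = tail_load2 v"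
    using has_sum_unique by (fastforce simp: algebra_simps)
  moreover have "tail_load v < 1"
    using tail_load_le_load[of v] v load by auto
  ultimately have "E = tail_load2 v / (1 - tail_load v)"
    by (simp add: field_simps)
  with E show ?thesis
    by simp
qed

lemma stationary_tail_mean_N:
  assumes st: "stationary n lam r \<pi>" and load: "load < 1" and v: "1 \<le> v" "v \<le> Suc n"
  shows "(\<Sum>u\<in>{v..n}. inv_r u * mean_N n \<pi> u) = tail_load2 v / (1 - tail_load v)"
proof (cases "v \<le> n")
  case True
  then have "v \<in> {1..n}"
    using v by simp
  from has_sum_unique[OF has_sum_tail_work_mean_N[OF st load this] stationary_mean_tail_work[OF st load this]]
  show ?thesis .
next
  case False
  then show ?thesis
    by (simp add: tail_load_def tail_load2_def)
qed

lemma tail_load_eq: "tail_load v = (\<Sum>u\<in>{v..n}. lam u / r u)"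
  by (simp add: tail_load_def inv_r_def)

lemma tail_load_Suc: "v \<le> n \<Longrightarrow> tail_load v = lam v / r v + tail_load (Suc v)"
  by (simp add: tail_load_eq sum.atLeast_Suc_atMost)

lemma tail_load2_Suc: "v \<le> n \<Longrightarrow> tail_load2 v = lam v / r v / r v + tail_load2 (Suc v)"
  by (simp add: tail_load2_def sum.atLeast_Suc_atMost inv_r_def power2_eq_square)

lemma sum_rho_ratio: "(\<Sum>u\<in>{v..n}. lam u / r u * (r v / r u - 1)) = r v * tail_load2 v - tail_load v"
  unfolding tail_load2_def tail_load_eq
  by (simp add: inv_r_def power2_eq_square sum_distrib_left sum_subtractf algebra_simps)

lemma stationary_mean_N:
  assumes st: "stationary n lam r \<pi>" and load: "load < 1" and v: "v \<in> {1..n}"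
  shows "mean_N n \<pi> v = lam v / r v * (1 + (\<Sum>u\<in>{v..n}. lam u / r u * (r v / r u - 1)))
      / ((1 - (\<Sum>u\<in>{v..n}. lam u / r u)) * (1 - (\<Sum>u\<in>{v<..n}. lam u / r u)))"
proof -
  have below_1: "tail_load w < 1" if "1 \<le> w" for w
    using tail_load_le_load[OF that] load by simp
  have gt: "{v<..n} = {Suc v..n}"
    by auto
  have "(\<Sum>u\<in>{v..n}. inv_r u * mean_N n \<pi> u) = inv_r v * mean_N n \<pi> v + (\<Sum>u\<in>{Suc v..n}. inv_r u * mean_N n \<pi> u)"
    using v by (simp add: sum.atLeast_Suc_atMost)
  then have "mean_N n \<pi> v = r v * (tail_load2 v / (1 - tail_load v) - tail_load2 (Suc v) / (1 - tail_load (Suc v)))"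
    using stationary_tail_mean_N[OF st load, of v] stationary_tail_mean_N[OF st load, of "Suc v"] v r_pos[OF v]
    by (simp add: inv_r_def field_simps)
  also have "\<dots> = lam v / r v * (1 + (r v * tail_load2 v - tail_load v)) / ((1 - tail_load v) * (1 - tail_load (Suc v)))"
    using mean_from_tails_identity[OF r_pos[OF v], of "lam v / r v" "tail_load (Suc v)" "tail_load2 (Suc v)"]
      below_1[of v] below_1[of "Suc v"] v tail_load_Suc[of v] tail_load2_Suc[of v]
    by (simp add: add_divide_distrib)
  finally show ?thesis
    unfolding sum_rho_ratio gt tail_load_eq[symmetric] .
qed

lemma stationary_throughput:
  assumes st: "stationary n lam r \<pi>" and load: "load < 1" and v: "v \<in> {1..n}"
  shows "lam v / mean_N n \<pi> v = r v * (1 - (\<Sum>u\<in>{v..n}. lam u / r u)) * (1 - (\<Sum>u\<in>{v<..n}. lam u / r u))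
      / (1 + (\<Sum>u\<in>{v..n}. lam u / r u * (r v / r u - 1)))"
proof -
  define X where "X = 1 + (\<Sum>u\<in>{v..n}. lam u / r u * (r v / r u - 1))"
  define D where "D = (1 - (\<Sum>u\<in>{v..n}. lam u / r u)) * (1 - (\<Sum>u\<in>{v<..n}. lam u / r u))"
  have "{v<..n} = {Suc v..n}"
    by auto
  then have D: "0 < D"
    unfolding D_def using tail_load_le_load[of v] tail_load_le_load[of "Suc v"] load v
    by (simp add: tail_load_eq[symmetric])
  have "r v * tail_load2 v - tail_load v = r v * tail_load2 (Suc v) - tail_load (Suc v)"
    using v r_pos[OF v] by (simp add: tail_load_Suc tail_load2_Suc field_simps)
  moreover have "0 \<le> r v * tail_load2 (Suc v)"
    using r_pos[OF v] tail_load2_nonneg[of "Suc v"] by simp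
  moreover have "tail_load (Suc v) < 1"
    using tail_load_le_load[of "Suc v"] load by simp
  ultimately have X: "0 < X"
    unfolding X_def sum_rho_ratio by linarith
  have mean: "mean_N n \<pi> v = lam v / r v * X / D"
    unfolding X_def D_def by (rule stationary_mean_N[OF st load v])
  moreover have "0 < mean_N n \<pi> v"
    unfolding mean using D X lam_pos[OF v] r_pos[OF v] by simp
  ultimately have "lam v / mean_N n \<pi> v = r v * D / X"
    using D X lam_pos[OF v] r_pos[OF v] by (simp add: field_simps)
  then show ?thesis
    unfolding X_def D_def by (simp add: mult.assoc)
qed

end

section \<open>Irreducibility and recurrence\<close>

definition njobs :: "nat \<Rightarrow> state \<Rightarrow> nat" where
  "njobs n x = (\<Sum>v\<in>{1..n}. x v)"

lemma njobs_depart: "v \<in> {1..n} \<Longrightarrow> 1 \<le> x v \<Longrightarrow> Suc (njobs n (depart v x)) = njobs n x"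
proof -
  assume v: "v \<in> {1..n}" and x: "1 \<le> x v"
  have "njobs n x = x v + (\<Sum>u\<in>{1..n} - {v}. x u)"
    unfolding njobs_def using v by (simp add: sum.remove)
  moreover have "njobs n (depart v x) = (x v - 1) + (\<Sum>u\<in>{1..n} - {v}. x u)"
    unfolding njobs_def using v by (simp add: sum.remove depart_def)
  ultimately show ?thesis
    using x by simp
qed

lemma njobs_arrive: "v \<in> {1..n} \<Longrightarrow> njobs n (arrive v x) = Suc (njobs n x)"
  using njobs_depart[of v n "arrive v x"] by (simp only: depart_arrive) (simp add: arrive_def)

lemma njobs_eq_0: "x \<in> states n \<Longrightarrow> njobs n x = 0 \<Longrightarrow> x = idle"
  unfolding njobs_def using state_eq_idle_iff by auto

lemma njobs_mono: "(\<And>w. x w \<le> y w) \<Longrightarrow> njobs n x \<le> njobs n y"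
  unfolding njobs_def by (intro sum_mono) auto

context beam_line
begin

definition step_rel :: "(state \<times> state) set" where
  "step_rel = {(a, b). a \<in> states n \<and> b \<in> states n \<and> a \<noteq> b \<and> rate n lam r a b > 0}"

lemma rate_ge_summand:
  assumes "v \<in> {1..n}"
  shows "(if y = arrive v x then lam v else 0) + (if 1 \<le> x v \<and> y = depart v x then r v * gamma n v x else 0)
    \<le> rate n lam r x y"
  unfolding rate_eq using assms lam_nonneg service_rate_nonneg
  by (intro member_le_sum[where f="\<lambda>v. (if y = arrive v x then lam v else 0)
        + (if 1 \<le> x v \<and> y = depart v x then r v * gamma n v x else 0)"])
     (auto intro!: add_nonneg_nonneg)

lemma rate_arrive_pos: "v \<in> {1..n} \<Longrightarrow> 0 < rate n lam r x (arrive v x)"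
  using rate_ge_summand[of v "arrive v x" x] service_rate_nonneg[of v x] lam_pos[of v]
  by (auto split: if_splits)

lemma rate_depart_top_beam_pos:
  assumes x: "x \<in> states n" "x \<noteq> idle"
  shows "0 < rate n lam r x (depart (top_beam n x) x)"
proof -
  let ?t = "top_beam n x"
  have t: "?t \<in> {1..n}" "1 \<le> x ?t"
    using top_beamD[OF x] by auto
  have "gamma n ?t x = 1"
    using served_iff_top_beam[OF x(1) t(1)] x(2) t(2) by auto
  moreover have "depart ?t x \<noteq> arrive ?t x"
    by (simp add: depart_def arrive_def fun_eq_iff)
  ultimately show ?thesis
    using rate_ge_summand[OF t(1), of "depart ?t x" x] t r_pos[OF t(1)] by auto
qed

lemma step_rel_to_idle: "x \<in> states n \<Longrightarrow> (x, idle) \<in> step_rel\<^sup>*"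
proof (induction "njobs n x" arbitrary: x)
  case 0
  then show ?case
    using njobs_eq_0 by auto
next
  case (Suc k)
  then have nonidle: "x \<noteq> idle"
    by (auto simp: njobs_def)
  let ?t = "top_beam n x"
  have t: "?t \<in> {1..n}" "1 \<le> x ?t"
    using top_beamD[OF Suc.prems nonidle] by auto
  have "(depart ?t x, idle) \<in> step_rel\<^sup>*"
    using Suc njobs_depart[of ?t n x, OF t] depart_in_states by simp
  moreover have "(x, depart ?t x) \<in> step_rel"
    unfolding step_rel_def using Suc.prems depart_in_states depart_neq[of x ?t, OF t(2)]
      rate_depart_top_beam_pos[OF Suc.prems nonidle] by auto
  ultimately show ?case
    by (meson converse_rtrancl_into_rtrancl)
qed

lemma step_rel_from_idle: "x \<in> states n \<Longrightarrow> (idle, x) \<in> step_rel\<^sup>*"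
proof (induction "njobs n x" arbitrary: x)
  case 0
  then show ?case
    using njobs_eq_0 by auto
next
  case (Suc k)
  then have nonidle: "x \<noteq> idle"
    by (auto simp: njobs_def)
  let ?t = "top_beam n x"
  have t: "?t \<in> {1..n}" "1 \<le> x ?t"
    using top_beamD[OF Suc.prems nonidle] by auto
  have "(idle, depart ?t x) \<in> step_rel\<^sup>*"
    using Suc njobs_depart[of ?t n x, OF t] depart_in_states by simp
  moreover have "(depart ?t x, x) \<in> step_rel"
    unfolding step_rel_def using Suc.prems depart_in_states depart_neq[of x ?t, OF t(2)]
      rate_arrive_pos[OF t(1), of "depart ?t x"] arrive_depart[of x ?t, OF t(2)] by auto
  ultimately show ?case
    by (meson rtrancl_into_rtrancl)
qed

theorem irreducible: "irreducible n lam r"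
  unfolding irreducible_def step_rel_def[symmetric]
  using step_rel_to_idle step_rel_from_idle by (blast intro: rtrancl_trans)

definition max_rate :: real where
  "max_rate = (\<Sum>v\<in>{1..n}. lam v + r v)"

lemma out_rate_le_max_rate: "out_rate x \<le> max_rate"
  unfolding out_rate_def max_rate_def
proof (intro sum_mono add_left_mono)
  fix v assume v: "v \<in> {1..n}"
  show "(if 1 \<le> x v then r v * gamma n v x else 0) \<le> r v"
    using r_pos[OF v] gamma_le_1[of n v x] gamma_nonneg[of n v x] by (auto simp: mult_le_cancel_left1)
qed

lemma out_rate_pos: "0 < out_rate x"
proof -
  have "lam 1 \<le> lam 1 + (if 1 \<le> x 1 then r 1 * gamma n 1 x else 0)"
    using service_rate_nonneg[of 1 x] n_pos by auto
  also have "\<dots> \<le> out_rate x"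
    unfolding out_rate_def using n_pos lam_nonneg service_rate_nonneg
    by (intro member_le_sum[where f="\<lambda>v. lam v + (if 1 \<le> x v then r v * gamma n v x else 0)"])
       (auto intro!: add_nonneg_nonneg)
  finally show ?thesis
    using lam_pos[of 1] n_pos by simp
qed

lemma max_rate_pos: "0 < max_rate"
  using out_rate_pos[of idle] out_rate_le_max_rate[of idle] by simp

definition hit_step :: "state \<Rightarrow> (state \<Rightarrow> ennreal) \<Rightarrow> state \<Rightarrow> ennreal" where
  "hit_step i k y = (if y = i then 0 else
     ennreal (1 / qout n lam r y)
     + infsum (\<lambda>z. ennreal (rate n lam r y z / qout n lam r y) * k z) (states n - {y}))"

lemma hit_time_eq_lfp: "hit_time n lam r i = lfp (hit_step i)"
  unfolding hit_time_def hit_step_def[abs_def] ..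

lemma mono_hit_step: "mono (hit_step i)"
proof (rule monoI, rule le_funI)
  fix k k' :: "state \<Rightarrow> ennreal" and y
  assume "k \<le> k'"
  then have "infsum (\<lambda>z. ennreal (rate n lam r y z / qout n lam r y) * k z) (states n - {y})
      \<le> infsum (\<lambda>z. ennreal (rate n lam r y z / qout n lam r y) * k' z) (states n - {y})"
    by (intro infsum_mono mult_left_mono) (simp_all add: le_fun_def nonneg_summable_on_complete)
  then show "hit_step i k y \<le> hit_step i k' y"
    unfolding hit_step_def by (auto intro!: add_left_mono)
qed

lemma infsum_rate_ennreal:
  assumes "x \<in> states n"
  shows "infsum (\<lambda>y. ennreal (rate n lam r x y / c) * k y) (states n - {x})
    = (\<Sum>y\<in>nbhd x. ennreal (rate n lam r x y / c) * k y)"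
proof -
  have "infsum (\<lambda>y. ennreal (rate n lam r x y / c) * k y) (states n - {x})
      = infsum (\<lambda>y. ennreal (rate n lam r x y / c) * k y) (nbhd x)"
    using nbhd_subset[OF assms] by (intro infsum_cong_neutral) (auto simp: rate_eq_0_outside)
  then show ?thesis
    by (simp add: finite_nbhd)
qed

lemma hit_step_eq:
  assumes "y \<in> states n" "y \<noteq> i"
  shows "hit_step i k y = ennreal (1 / out_rate y) + (\<Sum>z\<in>nbhd y. ennreal (rate n lam r y z / out_rate y) * k z)"
  unfolding hit_step_def using assms by (simp add: qout_eq infsum_rate_ennreal)

lemma hit_step_real:
  assumes y: "y \<in> states n" "y \<noteq> i" and K: "\<And>z. 0 \<le> K z"
  shows "hit_step i (\<lambda>z. ennreal (K z)) y = ennreal ((1 + succ_sum K y) / out_rate y)"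
proof -
  have q: "0 < out_rate y"
    by (rule out_rate_pos)
  have "(\<Sum>z\<in>nbhd y. ennreal (rate n lam r y z / out_rate y) * ennreal (K z))
      = (\<Sum>z\<in>nbhd y. ennreal (rate n lam r y z / out_rate y * K z))"
    using K q rate_nonneg by (intro sum.cong refl) (rule ennreal_mult[symmetric]; simp)
  also have "\<dots> = ennreal (\<Sum>z\<in>nbhd y. rate n lam r y z / out_rate y * K z)"
    using K q rate_nonneg by (intro sum_ennreal) simp
  also have "(\<Sum>z\<in>nbhd y. rate n lam r y z / out_rate y * K z) = succ_sum K y / out_rate y"
    using sum_nbhd_rate[of y K] by (simp add: sum_divide_distrib[symmetric])
  finally show ?thesis
    unfolding hit_step_eq[OF y] using q succ_sum_nonneg[of K y] K
    by (simp add: add_divide_distrib)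
qed

lemma hit_time_le_supersolution:
  assumes K_nonneg: "\<And>z. 0 \<le> K z"
    and K: "\<And>y. y \<in> states n \<Longrightarrow> y \<noteq> i \<Longrightarrow> 1 + gen K y \<le> 0"
    and z: "z \<in> states n"
  shows "hit_time n lam r i z \<le> ennreal (K z)"
proof -
  define k where "k z = (if z \<in> states n then ennreal (K z) else \<infinity>)" for z
  have "hit_step i k \<le> k"
  proof (rule le_funI)
    fix y
    show "hit_step i k y \<le> k y"
    proof (cases "y \<in> states n \<and> y \<noteq> i")
      case True
      have "hit_step i k y = hit_step i (\<lambda>z. ennreal (K z)) y"
        unfolding hit_step_eq[OF True[THEN conjunct1] True[THEN conjunct2]]
        using nbhd_subset[of y] True by (intro arg_cong2[where f="(+)"] refl sum.cong) (auto simp: k_def)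
      also have "\<dots> = ennreal ((1 + succ_sum K y) / out_rate y)"
        using True K_nonneg by (intro hit_step_real) auto
      also have "(1 + succ_sum K y) / out_rate y \<le> K y"
        using K[of y] True out_rate_pos[of y] unfolding gen_def by (simp add: divide_le_eq algebra_simps)
      finally show ?thesis
        using True by (simp add: k_def ennreal_leI)
    next
      case False
      then show ?thesis
        by (cases "y = i") (auto simp: hit_step_def k_def)
    qed
  qed
  then have "hit_time n lam r i \<le> k"
    unfolding hit_time_eq_lfp by (rule lfp_lowerbound)
  then have "hit_time n lam r i z \<le> k z"
    by (rule le_funD)
  then show ?thesis
    using z by (simp add: k_def)
qed

lemma mean_return_eq:
  "i \<in> states n \<Longrightarrow> mean_return n lam r i =
    ennreal (1 / out_rate i) + (\<Sum>z\<in>nbhd i. ennreal (rate n lam r i z / out_rate i) * hit_time n lam r i z)"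
  unfolding mean_return_def by (simp add: qout_eq infsum_rate_ennreal)

definition min_lam :: real where
  "min_lam = Min (lam ` {1..n})"

definition approach_factor :: real where
  "approach_factor = min 1 (min_lam / max_rate)"

lemma min_lam_pos: "0 < min_lam"
  unfolding min_lam_def using n_pos lam_pos by (subst Min_gr_iff) auto

lemma min_lam_le: "v \<in> {1..n} \<Longrightarrow> min_lam \<le> lam v"
  unfolding min_lam_def by (intro Min_le) auto

lemma approach_factor_pos: "0 < approach_factor"
  unfolding approach_factor_def using min_lam_pos max_rate_pos by simp

lemma approach_factor_le_1: "approach_factor \<le> 1"
  unfolding approach_factor_def by simp

lemma approach_factor_max_rate: "approach_factor * max_rate \<le> min_lam"
  unfolding approach_factor_def using max_rate_pos by (simp add: min_def field_simps)

definition approach :: "state \<Rightarrow> state \<Rightarrow> real" where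
  "approach i y = (if y \<noteq> idle \<and> y \<in> states n \<and> (\<forall>w. y w \<le> i w)
     then approach_factor ^ (njobs n i - njobs n y) else 0)"

lemma approach_nonneg: "0 \<le> approach i y"
  unfolding approach_def using approach_factor_pos by simp

lemma approach_le_1: "approach i y \<le> 1"
  unfolding approach_def using approach_factor_pos approach_factor_le_1 by (simp add: power_le_one)

lemma exists_beam_below:
  assumes "y \<in> states n" "i \<in> states n" "y \<noteq> i" "\<And>w. y w \<le> i w"
  obtains v where "v \<in> {1..n}" "y v < i v"
proof -
  have "\<exists>v\<in>{1..n}. y v \<noteq> i v"
  proof (rule ccontr)
    assume "\<not> ?thesis"
    then have "y = i"
      using assms(1,2) unfolding states_def by (auto simp: fun_eq_iff)
    then show False
      using assms(3) by simp
  qed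
  then show ?thesis
    using assms(4) that by (metis le_neq_implies_less)
qed

text \<open>Away from \<open>idle\<close> and \<open>i\<close>, a state below \<open>i\<close> has an arrival moving it one job closer to
  \<open>i\<close>; this arrival alone outweighs the total outflow because \<open>approach_factor\<close> is small.\<close>
lemma gen_approach_nonneg:
  assumes i: "i \<in> states n" and y: "y \<in> states n" "y \<noteq> idle" "y \<noteq> i"
  shows "0 \<le> gen (approach i) y"
proof (cases "\<forall>w. y w \<le> i w")
  case False
  then have "approach i y = 0"
    unfolding approach_def by auto
  then show ?thesis
    unfolding gen_def using succ_sum_nonneg[of "approach i" y] approach_nonneg by simp
next
  case True
  then obtain v where v: "v \<in> {1..n}" "y v < i v"
    using exists_beam_below[OF y(1) i y(3)] by blast
  let ?c = approach_factor
  define d where "d = njobs n i - njobs n y"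
  have below: "\<forall>w. arrive v y w \<le> i w"
    using True v by (auto simp: arrive_def)
  have nonidle: "arrive v y \<noteq> idle"
    by (auto simp: arrive_def fun_eq_iff)
  have "njobs n (arrive v y) \<le> njobs n i"
    using njobs_mono[of "arrive v y" i n] below by blast
  then have d: "1 \<le> d" "njobs n i - njobs n (arrive v y) = d - 1"
    using njobs_arrive[OF v(1), of y] unfolding d_def by auto
  have "out_rate y * approach i y \<le> max_rate * ?c ^ d"
    unfolding approach_def d_def using True y out_rate_le_max_rate[of y] approach_factor_pos
    by (simp add: mult_right_mono)
  also have "\<dots> = (?c * max_rate) * ?c ^ (d - 1)"
    using d(1) by (cases d) (auto simp: algebra_simps)
  also have "\<dots> \<le> lam v * ?c ^ (d - 1)"
    using approach_factor_max_rate min_lam_le[OF v(1)] approach_factor_pos by (intro mult_right_mono) auto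
  also have "\<dots> = lam v * approach i (arrive v y)"
    unfolding approach_def using below nonidle arrive_in_states[OF y(1) v(1)] d(2) by simp
  also have "\<dots> \<le> succ_sum (approach i) y"
    by (rule succ_sum_ge_arrival[OF approach_nonneg v(1)])
  finally show ?thesis
    unfolding gen_def by simp
qed

lemma gen_approach_idle_pos:
  assumes i: "i \<in> states n" "i \<noteq> idle"
  shows "0 < gen (approach i) idle"
proof -
  obtain v where v: "v \<in> {1..n}" "1 \<le> i v"
    using i state_eq_idle_iff[OF i(1)] by (metis less_one not_le)
  have "\<forall>w. arrive v idle w \<le> i w"
    using v by (auto simp: arrive_def)
  moreover have "arrive v idle \<noteq> idle"
    by (auto simp: arrive_def fun_eq_iff)
  ultimately have "0 < approach i (arrive v idle)"
    unfolding approach_def using arrive_in_states[OF idle_in_states v(1)] approach_factor_pos by simp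
  then have "0 < lam v * approach i (arrive v idle)"
    using lam_pos[OF v(1)] by simp
  also have "\<dots> \<le> succ_sum (approach i) idle"
    by (rule succ_sum_ge_arrival[OF approach_nonneg v(1)])
  finally show ?thesis
    unfolding gen_def approach_def by simp
qed

text \<open>\<open>work / (1 - load)\<close> has drift \<open>-1\<close> off \<open>idle\<close> but positive drift at \<open>idle\<close>; subtracting a multiple
  of \<open>approach i\<close>, whose drift is nonnegative off \<open>{idle, i}\<close> and positive at \<open>idle\<close>, repairs this.\<close>
definition hit_bound :: "state \<Rightarrow> state \<Rightarrow> real" where
  "hit_bound i z = (let B = (if i = idle then 0 else (1 + load / (1 - load)) / gen (approach i) idle)
     in 1 / (1 - load) * work z + (- B) * approach i z + B)"

lemma hit_bound:
  assumes load: "load < 1" and i: "i \<in> states n"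
  shows "0 \<le> hit_bound i z" and "y \<in> states n \<Longrightarrow> y \<noteq> i \<Longrightarrow> 1 + gen (hit_bound i) y \<le> 0"
proof -
  define B where "B = (if i = idle then 0 else (1 + load / (1 - load)) / gen (approach i) idle)"
  have hb: "hit_bound i = (\<lambda>z. 1 / (1 - load) * work z + (- B) * approach i z + B)"
    unfolding hit_bound_def B_def by (simp add: fun_eq_iff Let_def)
  have B: "0 \<le> B"
    unfolding B_def using gen_approach_idle_pos[OF i] load load_nonneg by auto
  have "0 \<le> B * (1 - approach i z)" "0 \<le> 1 / (1 - load) * work z"
    using B approach_le_1[of i z] load work_nonneg[of z] by auto
  then show "0 \<le> hit_bound i z"
    unfolding hb by (simp add: algebra_simps)
  assume y: "y \<in> states n" "y \<noteq> i"
  have gen: "gen (hit_bound i) y = 1 / (1 - load) * gen work y - B * gen (approach i) y"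
    unfolding hb gen_affine by simp
  show "1 + gen (hit_bound i) y \<le> 0"
  proof (cases "y = idle")
    case True
    then have "i \<noteq> idle"
      using y by simp
    then have "B * gen (approach i) y = 1 + load / (1 - load)"
      unfolding B_def using gen_approach_idle_pos[OF i] True by simp
    then show ?thesis
      unfolding gen gen_work[OF y(1)] using True by simp
  next
    case False
    have "0 \<le> B * gen (approach i) y"
      using B gen_approach_nonneg[OF i y(1) False y(2)] by simp
    moreover have "1 + 1 / (1 - load) * (load - 1) = 0"
      using load by (simp add: field_simps)
    ultimately show ?thesis
      unfolding gen gen_work[OF y(1)] using False by simp
  qed
qed

theorem mean_return_finite:
  assumes load: "load < 1" and i: "i \<in> states n"
  shows "mean_return n lam r i < \<infinity>"
proof -
  have hit: "hit_time n lam r i z \<le> ennreal (hit_bound i z)" if "z \<in> states n" for z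
    using hit_bound[OF load i] that by (intro hit_time_le_supersolution) auto
  have "mean_return n lam r i
      \<le> ennreal (1 / out_rate i) + (\<Sum>z\<in>nbhd i. ennreal (rate n lam r i z / out_rate i) * ennreal (hit_bound i z))"
    unfolding mean_return_eq[OF i] using nbhd_subset[OF i] hit
    by (intro add_left_mono sum_mono mult_left_mono) auto
  also have "\<dots> < \<infinity>"
    by (simp add: finite_nbhd ennreal_mult_less_top)
  finally show ?thesis .
qed

definition jump_op :: "(state \<Rightarrow> real) \<Rightarrow> state \<Rightarrow> real" where
  "jump_op f y = (if y = idle then 0 else succ_sum f y / out_rate y)"

text \<open>\<open>survival j y\<close> is the probability that the jump chain started in \<open>y\<close> has not reached
  \<open>idle\<close> within \<open>j\<close> jumps.\<close>
definition survival :: "nat \<Rightarrow> state \<Rightarrow> real" where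
  "survival j = (jump_op ^^ j) (\<lambda>y. if y = idle then 0 else 1)"

lemma survival_Suc: "survival (Suc j) = jump_op (survival j)"
  by (simp add: survival_def)

lemma survival_nonneg: "0 \<le> survival j y"
proof (induction j arbitrary: y)
  case (Suc j)
  then show ?case
    using succ_sum_nonneg[of "survival j" y] out_rate_pos[of y] by (simp add: survival_Suc jump_op_def)
qed (simp add: survival_def)

lemma survival_idle: "survival j idle = 0"
  by (cases j) (simp_all add: survival_def jump_op_def)

lemma jump_op_mono:
  "y \<in> states n \<Longrightarrow> (\<And>z. z \<in> states n \<Longrightarrow> f z \<le> g z) \<Longrightarrow> jump_op f y \<le> jump_op g y"
  unfolding jump_op_def using nbhd_subset[of y] out_rate_pos[of y]
  by (auto intro!: divide_right_mono succ_sum_mono)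

lemma work_le_jump_op_work:
  assumes load: "1 \<le> load" and y: "y \<in> states n"
  shows "work y \<le> jump_op work y"
proof (cases "y = idle")
  case False
  have "out_rate y * work y \<le> succ_sum work y"
    using gen_work[OF y] False load unfolding gen_def by simp
  then show ?thesis
    using False out_rate_pos[of y] by (simp add: jump_op_def field_simps)
qed (simp add: jump_op_def work_idle)

lemma work_le_iter_jump_op:
  assumes load: "1 \<le> load"
  shows "y \<in> states n \<Longrightarrow> work y \<le> (jump_op ^^ j) work y"
proof (induction j arbitrary: y)
  case (Suc j)
  have "work y \<le> jump_op work y"
    by (rule work_le_jump_op_work[OF load Suc.prems])
  also have "\<dots> \<le> jump_op ((jump_op ^^ j) work) y"
    by (rule jump_op_mono[OF Suc.prems Suc.IH])
  finally show ?case
    by simp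
qed simp

text \<open>One jump changes the work by at most \<open>inv_r_sum\<close>, and \<open>jump_op\<close> ignores paths through \<open>idle\<close>.\<close>
lemma iter_jump_op_work_le:
  "y \<in> states n \<Longrightarrow> (jump_op ^^ j) work y \<le> (work y + inv_r_sum * real j) * survival j y"
proof (induction j arbitrary: y)
  case 0
  then show ?case
    by (cases "y = idle") (auto simp: survival_def work_idle)
next
  case (Suc j)
  show ?case
  proof (cases "y = idle")
    case True
    then show ?thesis
      by (simp add: jump_op_def survival_idle)
  next
    case False
    have "succ_sum ((jump_op ^^ j) work) y \<le> succ_sum (\<lambda>z. (work y + inv_r_sum * real (Suc j)) * survival j z) y"
    proof (rule succ_sum_mono)
      fix z assume z: "z \<in> nbhd y"
      then have "(jump_op ^^ j) work z \<le> (work z + inv_r_sum * real j) * survival j z"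
        using nbhd_subset[OF Suc.prems] by (intro Suc.IH) auto
      also have "\<dots> \<le> (work y + inv_r_sum * real (Suc j)) * survival j z"
        using work_nbhd_le[OF z] survival_nonneg[of j z] by (intro mult_right_mono) (auto simp: algebra_simps)
      finally show "(jump_op ^^ j) work z \<le> (work y + inv_r_sum * real (Suc j)) * survival j z" .
    qed
    then have "succ_sum ((jump_op ^^ j) work) y / out_rate y
        \<le> (work y + inv_r_sum * real (Suc j)) * (succ_sum (survival j) y / out_rate y)"
      using out_rate_pos[of y] by (simp add: succ_sum_cmult divide_right_mono)
    moreover have "(jump_op ^^ Suc j) work y = succ_sum ((jump_op ^^ j) work) y / out_rate y"
      using False by (simp add: jump_op_def[of _ y])
    moreover have "survival (Suc j) y = succ_sum (survival j) y / out_rate y"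
      using False by (simp add: survival_Suc jump_op_def[of _ y])
    ultimately show ?thesis
      by simp
  qed
qed

lemma survival_ge:
  assumes load: "1 \<le> load" and y: "y \<in> states n"
  shows "work y / (work y + inv_r_sum * real j) \<le> survival j y"
proof (cases "work y = 0")
  case False
  then have "0 < work y"
    using work_nonneg[of y] by simp
  moreover have "work y \<le> (work y + inv_r_sum * real j) * survival j y"
    using work_le_iter_jump_op[OF load y, of j] iter_jump_op_work_le[OF y, of j] by simp
  ultimately show ?thesis
    using inv_r_sum_nonneg by (simp add: divide_le_eq mult.commute add_pos_nonneg)
qed (simp add: survival_nonneg)

text \<open>The expected time to reach \<open>idle\<close> is at least \<open>1 / max_rate\<close> per jump survived.\<close>
lemma iter_hit_step_ge:
  "y \<in> states n \<Longrightarrow> ennreal (1 / max_rate * (\<Sum>j<m. survival j y)) \<le> ((hit_step idle) ^^ m) bot y"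
proof (induction m arbitrary: y)
  case (Suc m)
  show ?case
  proof (cases "y = idle")
    case True
    then show ?thesis
      by (simp add: survival_idle)
  next
    case False
    let ?h = "\<lambda>z. 1 / max_rate * (\<Sum>j<m. survival j z)"
    have h_nonneg: "0 \<le> ?h z" for z
      using max_rate_pos survival_nonneg by (simp add: sum_nonneg)
    have "1 / max_rate * (\<Sum>j<Suc m. survival j y) = 1 / max_rate * (1 + (\<Sum>j<m. succ_sum (survival j) y / out_rate y))"
      using False by (simp only: sum.lessThan_Suc_shift) (simp add: survival_Suc jump_op_def survival_def)
    also have "\<dots> = 1 / max_rate + succ_sum ?h y / out_rate y"
    proof -
      have "succ_sum ?h y = 1 / max_rate * (\<Sum>j<m. succ_sum (survival j) y)"
        by (simp only: succ_sum_cmult succ_sum_sum)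
      then show ?thesis
        by (simp add: sum_divide_distrib algebra_simps)
    qed
    also have "\<dots> \<le> (1 + succ_sum ?h y) / out_rate y"
      using out_rate_pos[of y] out_rate_le_max_rate[of y] by (simp add: frac_le add_divide_distrib)
    finally have "ennreal (1 / max_rate * (\<Sum>j<Suc m. survival j y)) \<le> hit_step idle (\<lambda>z. ennreal (?h z)) y"
      unfolding hit_step_real[OF Suc.prems False h_nonneg] by (rule ennreal_leI)
    also have "\<dots> = ennreal (1 / out_rate y) + (\<Sum>z\<in>nbhd y. ennreal (rate n lam r y z / out_rate y) * ennreal (?h z))"
      by (rule hit_step_eq[OF Suc.prems False])
    also have "\<dots> \<le> ennreal (1 / out_rate y) + (\<Sum>z\<in>nbhd y. ennreal (rate n lam r y z / out_rate y) * ((hit_step idle) ^^ m) bot z)"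
      using nbhd_subset[OF Suc.prems] by (intro add_left_mono sum_mono mult_left_mono Suc.IH) auto
    also have "\<dots> = ((hit_step idle) ^^ Suc m) bot y"
      using hit_step_eq[OF Suc.prems False] by simp
    finally show ?thesis .
  qed
qed simp

lemma hit_time_idle_ge_harm:
  assumes load: "1 \<le> load"
  shows "ennreal (inv_r 1 / (max_rate * inv_r_sum) * harm m) \<le> hit_time n lam r idle (arrive 1 idle)"
proof -
  let ?e = "arrive 1 idle"
  have one: "(1::nat) \<in> {1..n}"
    using n_pos by simp
  have e: "?e \<in> states n"
    by (rule arrive_in_states[OF idle_in_states one])
  have work_e: "work ?e = inv_r 1"
    using work_arrive[OF one, of idle] work_idle by simp
  have inv_r_1: "0 < inv_r 1" "inv_r 1 \<le> inv_r_sum"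
    using inv_r_pos[OF one] inv_r_le_sum[OF one] by auto
  have "inv_r 1 / (max_rate * inv_r_sum) * harm m = 1 / max_rate * (\<Sum>j<m. inv_r 1 / inv_r_sum * inverse (real (Suc j)))"
    unfolding harm_altdef sum_distrib_left by (intro sum.cong refl) (simp add: field_simps)
  also have "\<dots> \<le> 1 / max_rate * (\<Sum>j<m. work ?e / (work ?e + inv_r_sum * real j))"
  proof (intro mult_left_mono sum_mono)
    fix j
    have "inv_r 1 + inv_r_sum * real j \<le> inv_r_sum * real (Suc j)" "0 < inv_r 1 + inv_r_sum * real j"
      using inv_r_1 by (auto simp: algebra_simps add_pos_nonneg)
    then show "inv_r 1 / inv_r_sum * inverse (real (Suc j)) \<le> work ?e / (work ?e + inv_r_sum * real j)"
      unfolding work_e using inv_r_1 by (simp add: field_simps frac_le)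
  qed (use max_rate_pos in simp)
  also have "\<dots> \<le> 1 / max_rate * (\<Sum>j<m. survival j ?e)"
    using survival_ge[OF load e] max_rate_pos by (intro mult_left_mono sum_mono) auto
  finally have "ennreal (inv_r 1 / (max_rate * inv_r_sum) * harm m) \<le> ((hit_step idle) ^^ m) bot ?e"
    using iter_hit_step_ge[OF e, of m] by (meson ennreal_leI order.trans)
  also have "\<dots> \<le> hit_time n lam r idle ?e"
    using Kleene_iter_lpfp[OF mono_hit_step eq_refl[OF lfp_fixpoint[OF mono_hit_step]]]
    unfolding hit_time_eq_lfp le_fun_def by blast
  finally show ?thesis .
qed

theorem mean_return_idle_infinite:
  assumes load: "1 \<le> load"
  shows "mean_return n lam r idle = \<infinity>"
proof -
  let ?e = "arrive 1 idle"
  have one: "(1::nat) \<in> {1..n}"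
    using n_pos by simp
  define c where "c = inv_r 1 / (max_rate * inv_r_sum)"
  have c: "0 < c"
    unfolding c_def using inv_r_pos[OF one] inv_r_le_sum[OF one] max_rate_pos by simp
  have hit_inf: "hit_time n lam r idle ?e = \<infinity>"
  proof (cases "hit_time n lam r idle ?e" rule: ennreal_cases)
    case (real h)
    have "harm m \<le> h / c" for m
    proof -
      have "c * harm m \<le> h"
        using hit_time_idle_ge_harm[OF load, of m] real unfolding c_def by (simp add: ennreal_le_iff)
      then show ?thesis
        using c by (simp add: field_simps)
    qed
    moreover obtain m where "h / c + 1 \<le> harm m"
      using harm_at_top unfolding filterlim_at_top eventually_sequentially by blast
    ultimately show ?thesis
      by (meson add_le_same_cancel1 linorder_not_le order.trans zero_less_one)
  qed simp
  have "ennreal (rate n lam r idle ?e / out_rate idle) * hit_time n lam r idle ?e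
      \<le> (\<Sum>z\<in>nbhd idle. ennreal (rate n lam r idle z / out_rate idle) * hit_time n lam r idle z)"
    using arrive_in_nbhd[OF one] by (intro member_le_sum) (auto simp: finite_nbhd)
  also have "\<dots> \<le> mean_return n lam r idle"
    unfolding mean_return_eq[OF idle_in_states] by simp
  finally show ?thesis
    using hit_inf rate_arrive_pos[OF one, of idle] out_rate_pos[of idle]
    by (simp add: ennreal_mult_top top_unique)
qed

end

section \<open>Existence of a stationary distribution\<close>

lemma summable_on_finite_support:
  fixes f :: "'a \<Rightarrow> real"
  assumes "finite {x. f x \<noteq> 0}"
  shows "f summable_on A"
proof -
  have "f summable_on (A \<inter> {x. f x \<noteq> 0})"
    using assms by simp
  then show ?thesis
    by (subst summable_on_cong_neutral[where T="A \<inter> {x. f x \<noteq> 0}" and g=f]) auto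
qed

lemma bounded_double_seq_diagonal_convergent:
  fixes f :: "nat \<Rightarrow> nat \<Rightarrow> real"
  assumes bdd: "\<And>m k. \<bar>f m k\<bar> \<le> B"
  obtains d where "strict_mono d" "\<And>k. convergent (\<lambda>j. f (d j) k)"
proof -
  let ?P = "\<lambda>k s. convergent (\<lambda>j. f (s j) k)"
  interpret nat: subseqs ?P
  proof (unfold convergent_def, unfold subseqs_def, auto)
    fix k :: nat and s :: "nat \<Rightarrow> nat"
    assume s: "strict_mono s"
    have "\<And>j. f (s j) k \<in> {-B..B}"
      using bdd by (simp add: abs_le_iff minus_le_iff)
    then have "\<exists>l s'. strict_mono s' \<and> ((\<lambda>j. f (s j) k) \<circ> s') \<longlonglongrightarrow> l"
      using compact_Icc compact_imp_seq_compact seq_compactE by metis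
    then show "\<exists>s'. strict_mono (s'::nat\<Rightarrow>nat) \<and> (\<exists>l. (\<lambda>j. f (s (s' j)) k) \<longlonglongrightarrow> l)"
      by (auto simp: comp_def)
  qed
  have "?P k nat.diagseq" for k
  proof -
    have "(\<lambda>j. f ((nat.seqseq (Suc k) \<circ> (\<lambda>j. nat.fold_reduce (Suc k) j (Suc k + j))) j) k)
        = (\<lambda>j. f (nat.seqseq (Suc k) j) k) \<circ> (\<lambda>j. nat.fold_reduce (Suc k) j (Suc k + j))"
      by auto
    then have "?P k (nat.diagseq \<circ> ((+) (Suc k)))"
      unfolding nat.diagseq_seqseq
      by (simp only:) (intro convergent_subseq_convergent nat.seqseq_holds nat.subseq_diagonal_rest)
    then obtain L where "(\<lambda>j. f (nat.diagseq (j + Suc k)) k) \<longlonglongrightarrow> L"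
      by (auto simp: add.commute dest: convergentD)
    then have "(\<lambda>j. f (nat.diagseq j) k) \<longlonglongrightarrow> L"
      by (rule LIMSEQ_offset)
    then show ?thesis
      by (auto simp: convergent_def)
  qed
  then show ?thesis
    using that nat.subseq_diagseq by blast
qed

lemma countable_states: "countable (states n)"
proof -
  define h where "h l v = (if 1 \<le> v \<and> v \<le> n then (if v - 1 < length l then l ! (v - 1) else 0) else 0)"
    for l :: "nat list" and v
  have "states n \<subseteq> range h"
  proof
    fix x assume x: "x \<in> states n"
    have "x = h (map x [1..<Suc n])"
      using x unfolding h_def states_def by (auto simp: fun_eq_iff nth_map_upt simp del: upt_Suc)
    then show "x \<in> range h"
      by blast
  qed
  then show ?thesis
    by (rule countable_subset) simp
qed

context beam_line
begin

definition fin_supp :: "(state \<Rightarrow> real) \<Rightarrow> bool" where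
  "fin_supp \<mu> \<longleftrightarrow> (\<forall>x. x \<notin> states n \<longrightarrow> \<mu> x = 0) \<and> finite {x. \<mu> x \<noteq> 0}"

lemma fin_supp_summable: "fin_supp \<mu> \<Longrightarrow> (\<lambda>y. \<mu> y * g y) summable_on A"
  unfolding fin_supp_def
  by (intro summable_on_finite_support) (auto elim: rev_finite_subset)

lemma finite_inflow_support:
  assumes "finite {x. \<mu> x \<noteq> 0}"
  shows "finite {x. inflow \<mu> x \<noteq> 0}"
proof (rule finite_subset)
  show "{x. inflow \<mu> x \<noteq> 0} \<subseteq> (\<Union>v\<in>{1..n}. arrive v ` {x. \<mu> x \<noteq> 0} \<union> depart v ` {x. \<mu> x \<noteq> 0})"
  proof
    fix x assume "x \<in> {x. inflow \<mu> x \<noteq> 0}"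
    then obtain v where v: "v \<in> {1..n}"
      "(if 1 \<le> x v then lam v * \<mu> (depart v x) else 0) + r v * gamma n v (arrive v x) * \<mu> (arrive v x) \<noteq> 0"
      unfolding inflow_def using sum.not_neutral_contains_not_neutral by blast
    then have "(1 \<le> x v \<and> \<mu> (depart v x) \<noteq> 0) \<or> \<mu> (arrive v x) \<noteq> 0"
      by (auto split: if_splits)
    then consider "1 \<le> x v" "\<mu> (depart v x) \<noteq> 0" | "\<mu> (arrive v x) \<noteq> 0"
      by blast
    then show "x \<in> (\<Union>v\<in>{1..n}. arrive v ` {x. \<mu> x \<noteq> 0} \<union> depart v ` {x. \<mu> x \<noteq> 0})"
    proof cases
      case 1
      then have "x = arrive v (depart v x)"
        by (simp add: arrive_depart)
      then show ?thesis
        using v(1) 1 by blast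
    next
      case 2
      have "x = depart v (arrive v x)"
        by simp
      then show ?thesis
        using v(1) 2 by blast
    qed
  qed
qed (use assms in auto)

text \<open>One step of the uniformised chain: jump with probability \<open>out_rate / max_rate\<close>.\<close>
definition unif_step :: "(state \<Rightarrow> real) \<Rightarrow> state \<Rightarrow> real" where
  "unif_step \<mu> x = (if x \<in> states n then \<mu> x + (inflow \<mu> x - out_rate x * \<mu> x) / max_rate else 0)"

lemma fin_supp_unif_step: "fin_supp \<mu> \<Longrightarrow> fin_supp (unif_step \<mu>)"
proof -
  assume \<mu>: "fin_supp \<mu>"
  have "{x. unif_step \<mu> x \<noteq> 0} \<subseteq> {x. \<mu> x \<noteq> 0} \<union> {x. inflow \<mu> x \<noteq> 0}"
    unfolding unif_step_def by auto
  then have "finite {x. unif_step \<mu> x \<noteq> 0}"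
    by (rule finite_subset) (use \<mu> finite_inflow_support in \<open>auto simp: fin_supp_def\<close>)
  then show ?thesis
    unfolding fin_supp_def unif_step_def by simp
qed

lemma unif_step_nonneg: "(\<And>y. 0 \<le> \<mu> y) \<Longrightarrow> 0 \<le> unif_step \<mu> x"
proof -
  assume \<mu>: "\<And>y. 0 \<le> \<mu> y"
  have "\<mu> x + (inflow \<mu> x - out_rate x * \<mu> x) / max_rate = \<mu> x * (max_rate - out_rate x) / max_rate + inflow \<mu> x / max_rate"
    using max_rate_pos by (simp add: field_simps)
  moreover have "0 \<le> \<mu> x * (max_rate - out_rate x) / max_rate"
    using \<mu> out_rate_le_max_rate[of x] max_rate_pos by simp
  moreover have "0 \<le> inflow \<mu> x / max_rate"
    using inflow_nonneg[OF \<mu>] max_rate_pos by simp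
  ultimately show ?thesis
    unfolding unif_step_def by simp
qed

lemma infsum_unif_step:
  assumes \<mu>: "fin_supp \<mu>"
  shows "infsum (\<lambda>x. unif_step \<mu> x * g x) (states n)
    = infsum (\<lambda>x. \<mu> x * g x) (states n) + infsum (\<lambda>y. \<mu> y * gen g y) (states n) / max_rate"
proof -
  have fin: "finite {x. \<mu> x \<noteq> 0}"
    using \<mu> by (simp add: fin_supp_def)
  have dep: "(\<lambda>y. if 1 \<le> y v then gamma n v y * \<mu> y * g (depart v y) else 0) summable_on states n" for v
    by (rule summable_on_finite_support, rule finite_subset[OF _ fin]) auto
  obtain s where inflow: "((\<lambda>x. g x * inflow \<mu> x) has_sum s) (states n)"
    and succ: "((\<lambda>y. \<mu> y * succ_sum g y) has_sum s) (states n)"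
    using inflow_pairing[OF fin_supp_summable[OF \<mu>] dep] .
  have out: "((\<lambda>x. \<mu> x * (out_rate x * g x)) has_sum infsum (\<lambda>x. \<mu> x * (out_rate x * g x)) (states n)) (states n)"
    using fin_supp_summable[OF \<mu>] by (rule has_sum_infsum)
  have \<mu>g: "((\<lambda>x. \<mu> x * g x) has_sum infsum (\<lambda>x. \<mu> x * g x) (states n)) (states n)"
    using fin_supp_summable[OF \<mu>] by (rule has_sum_infsum)
  have "((\<lambda>y. \<mu> y * gen g y) has_sum s - infsum (\<lambda>x. \<mu> x * (out_rate x * g x)) (states n)) (states n)"
    using has_sum_diff[OF succ out] unfolding gen_def by (simp add: algebra_simps)
  then have gen: "infsum (\<lambda>y. \<mu> y * gen g y) (states n) = s - infsum (\<lambda>x. \<mu> x * (out_rate x * g x)) (states n)"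
    by (rule infsumI)
  have "((\<lambda>x. \<mu> x * g x + (g x * inflow \<mu> x - \<mu> x * (out_rate x * g x)) / max_rate) has_sum
      infsum (\<lambda>x. \<mu> x * g x) (states n) + (s - infsum (\<lambda>x. \<mu> x * (out_rate x * g x)) (states n)) / max_rate) (states n)"
    using has_sum_add[OF \<mu>g has_sum_cmult_right[OF has_sum_diff[OF inflow out], of "1 / max_rate"]] by simp
  then have "((\<lambda>x. unif_step \<mu> x * g x) has_sum
      infsum (\<lambda>x. \<mu> x * g x) (states n) + infsum (\<lambda>y. \<mu> y * gen g y) (states n) / max_rate) (states n)"
    unfolding gen by (rule has_sum_cong[THEN iffD1, rotated]) (simp add: unif_step_def field_simps)
  then show ?thesis
    by (rule infsumI)
qed

definition unif_dist :: "nat \<Rightarrow> state \<Rightarrow> real" where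
  "unif_dist k = (unif_step ^^ k) (\<lambda>x. if x = idle then 1 else 0)"

lemma unif_dist_Suc: "unif_dist (Suc k) = unif_step (unif_dist k)"
  by (simp add: unif_dist_def)

lemma fin_supp_unif_dist: "fin_supp (unif_dist k)"
proof (induction k)
  case 0
  have "{x. (if x = idle then 1 else 0 :: real) \<noteq> 0} = {idle}"
    by auto
  then show ?case
    unfolding fin_supp_def unif_dist_def using idle_in_states by auto
qed (simp add: unif_dist_Suc fin_supp_unif_step)

lemma unif_dist_nonneg: "0 \<le> unif_dist k x"
  by (induction k arbitrary: x) (simp_all add: unif_dist_def unif_step_nonneg)

lemma infsum_unif_dist_0: "infsum (\<lambda>x. unif_dist 0 x * g x) (states n) = g idle"
proof -
  have "infsum (\<lambda>x. unif_dist 0 x * g x) (states n) = infsum (\<lambda>x. unif_dist 0 x * g x) {idle}"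
    by (intro infsum_cong_neutral) (auto simp: unif_dist_def idle_in_states)
  then show ?thesis
    by (simp add: unif_dist_def)
qed

lemma unif_dist_mass: "infsum (unif_dist k) (states n) = 1"
proof (induction k)
  case 0
  then show ?case
    using infsum_unif_dist_0[of "\<lambda>_. 1"] by simp
next
  case (Suc k)
  have "gen (\<lambda>_. 1) y = 0" for y
    unfolding gen_def by (simp add: succ_sum_const)
  then show ?case
    using infsum_unif_step[OF fin_supp_unif_dist, of k "\<lambda>_. 1"] Suc by (simp add: unif_dist_Suc)
qed

lemma unif_dist_le_1: "x \<in> states n \<Longrightarrow> unif_dist k x \<le> 1"
proof -
  assume x: "x \<in> states n"
  have "sum (unif_dist k) {x} \<le> infsum (unif_dist k) (states n)"
    using x unif_dist_nonneg fin_supp_summable[OF fin_supp_unif_dist, of k "\<lambda>_. 1"]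
    by (intro finite_sum_le_infsum) auto
  then show ?thesis
    using unif_dist_mass by simp
qed

lemma unif_dist_has_sum: "(unif_dist k has_sum 1) (states n)"
proof -
  have "unif_dist k summable_on states n"
    using fin_supp_summable[OF fin_supp_unif_dist, of k "\<lambda>_. 1"] by simp
  then show ?thesis
    using unif_dist_mass[of k] has_sum_infsum by metis
qed

lemma unif_dist_work_sq_step:
  "infsum (\<lambda>x. unif_dist (Suc k) x * work x ^ 2) (states n) \<le> infsum (\<lambda>x. unif_dist k x * work x ^ 2) (states n)
    + (inv_r_sum + load2 - 2 * (1 - load) * infsum (\<lambda>x. unif_dist k x * work x) (states n)) / max_rate"
proof -
  let ?E = "infsum (\<lambda>x. unif_dist k x * work x) (states n)"
  let ?b = "\<lambda>y. inv_r_sum + load2 - 2 * (1 - load) * work y"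
  have "((\<lambda>y. (inv_r_sum + load2) * unif_dist k y - 2 * (1 - load) * (unif_dist k y * work y))
      has_sum ((inv_r_sum + load2) * 1 - 2 * (1 - load) * ?E)) (states n)"
    by (intro has_sum_diff has_sum_cmult_right unif_dist_has_sum has_sum_infsum
        fin_supp_summable[OF fin_supp_unif_dist])
  then have b: "infsum (\<lambda>y. unif_dist k y * ?b y) (states n) = inv_r_sum + load2 - 2 * (1 - load) * ?E"
    by (intro infsumI) (simp add: algebra_simps)
  have "infsum (\<lambda>y. unif_dist k y * gen (\<lambda>z. work z ^ 2) y) (states n) \<le> infsum (\<lambda>y. unif_dist k y * ?b y) (states n)"
    using gen_work_sq_le unif_dist_nonneg
    by (intro infsum_mono fin_supp_summable[OF fin_supp_unif_dist] mult_left_mono) auto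
  then show ?thesis
    using infsum_unif_step[OF fin_supp_unif_dist, of k "\<lambda>z. work z ^ 2"] b max_rate_pos
    by (simp add: unif_dist_Suc divide_right_mono)
qed

text \<open>Telescoping the drift bound for \<open>work ^ 2\<close> along the chain bounds the time-averaged mean work.\<close>
lemma sum_mean_work_unif_dist:
  assumes load: "load < 1"
  shows "(\<Sum>k<m. infsum (\<lambda>x. unif_dist k x * work x) (states n)) \<le> real m * work_bound"
proof -
  define E where "E k = infsum (\<lambda>x. unif_dist k x * work x) (states n)" for k
  define Y where "Y k = infsum (\<lambda>x. unif_dist k x * work x ^ 2) (states n)" for k
  have telescope: "Y m \<le> Y 0 + (\<Sum>k<m. (inv_r_sum + load2 - 2 * (1 - load) * E k) / max_rate)"
  proof (induction m)
    case (Suc m)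
    then show ?case
      using unif_dist_work_sq_step[of m] by (simp add: Y_def E_def)
  qed simp
  have "Y 0 = 0"
    unfolding Y_def by (simp add: infsum_unif_dist_0 work_idle)
  moreover have "0 \<le> Y m"
    unfolding Y_def using unif_dist_nonneg by (intro infsum_nonneg) simp
  ultimately have "0 \<le> (\<Sum>k<m. inv_r_sum + load2 - 2 * (1 - load) * E k) / max_rate"
    using telescope by (simp add: sum_divide_distrib[symmetric])
  then have "0 \<le> (\<Sum>k<m. inv_r_sum + load2 - 2 * (1 - load) * E k)"
    using max_rate_pos by (simp add: zero_le_divide_iff)
  then have "2 * (1 - load) * (\<Sum>k<m. E k) \<le> real m * (inv_r_sum + load2)"
    by (simp add: sum_subtractf sum_distrib_left)
  then show ?thesis
    unfolding E_def[symmetric] work_bound_def using load by (simp add: field_simps)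
qed

definition cesaro :: "nat \<Rightarrow> state \<Rightarrow> real" where
  "cesaro m x = (\<Sum>k<Suc m. unif_dist k x) / real (Suc m)"

lemma cesaro_nonneg: "0 \<le> cesaro m x"
  unfolding cesaro_def using unif_dist_nonneg by (simp add: sum_nonneg)

lemma cesaro_le_1: "x \<in> states n \<Longrightarrow> cesaro m x \<le> 1"
proof -
  assume x: "x \<in> states n"
  have "(\<Sum>k<Suc m. unif_dist k x) \<le> (\<Sum>k<Suc m. 1)"
    using unif_dist_le_1[OF x] by (intro sum_mono) auto
  then show ?thesis
    unfolding cesaro_def by (simp add: divide_le_eq)
qed

lemma fin_supp_cesaro: "fin_supp (cesaro m)"
proof -
  have "{x. cesaro m x \<noteq> 0} \<subseteq> (\<Union>k<Suc m. {x. unif_dist k x \<noteq> 0})"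
    unfolding cesaro_def using sum.not_neutral_contains_not_neutral by fastforce
  moreover have "finite (\<Union>k<Suc m. {x. unif_dist k x \<noteq> 0})"
    using fin_supp_unif_dist by (auto simp: fin_supp_def)
  ultimately show ?thesis
    using fin_supp_unif_dist unfolding fin_supp_def cesaro_def by (auto intro: finite_subset)
qed

lemma infsum_cesaro:
  "infsum (\<lambda>x. cesaro m x * g x) (states n) = (\<Sum>k<Suc m. infsum (\<lambda>x. unif_dist k x * g x) (states n)) / real (Suc m)"
proof -
  have "((\<lambda>x. \<Sum>k<Suc m. unif_dist k x * g x) has_sum (\<Sum>k<Suc m. infsum (\<lambda>x. unif_dist k x * g x) (states n))) (states n)"
    by (intro has_sum_sum has_sum_infsum fin_supp_summable[OF fin_supp_unif_dist]) auto
  from has_sum_cmult_right[OF this, of "1 / real (Suc m)"] show ?thesis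
    unfolding cesaro_def by (intro infsumI) (simp add: sum_distrib_right del: sum.lessThan_Suc)
qed

lemma cesaro_mass: "infsum (cesaro m) (states n) = 1"
  using infsum_cesaro[of m "\<lambda>_. 1"] unif_dist_mass by simp

lemma cesaro_mean_work:
  assumes load: "load < 1"
  shows "infsum (\<lambda>x. cesaro m x * work x) (states n) \<le> work_bound"
  using sum_mean_work_unif_dist[OF load, of "Suc m"] unfolding infsum_cesaro
  by (simp add: divide_le_eq mult.commute)

lemma finite_work_below: "finite {x \<in> states n. work x < M}"
proof -
  define K where "K = nat \<lceil>(\<Sum>v\<in>{1..n}. r v) * M\<rceil>"
  have "{x \<in> states n. work x < M} \<subseteq> {f. \<forall>v. (v \<in> {1..n} \<longrightarrow> f v \<in> {0..K}) \<and> (v \<notin> {1..n} \<longrightarrow> f v = 0)}"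
  proof
    fix x assume x: "x \<in> {x \<in> states n. work x < M}"
    have "x v \<le> K" if v: "v \<in> {1..n}" for v
    proof -
      have "0 \<le> M"
        using x work_nonneg[of x] by simp
      have "real (x v) \<le> r v * work x"
        by (rule count_le_work[OF v])
      also have "\<dots> \<le> r v * M"
        using x r_nonneg[OF v] by (intro mult_left_mono) auto
      also have "\<dots> \<le> (\<Sum>v\<in>{1..n}. r v) * M"
        using v r_nonneg \<open>0 \<le> M\<close> by (intro mult_right_mono member_le_sum) auto
      also have "\<dots> \<le> real K"
        unfolding K_def by linarith
      finally show ?thesis
        by simp
    qed
    then show "x \<in> {f. \<forall>v. (v \<in> {1..n} \<longrightarrow> f v \<in> {0..K}) \<and> (v \<notin> {1..n} \<longrightarrow> f v = 0)}"
      using x unfolding states_def by auto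
  qed
  moreover have "finite {f. \<forall>v. (v \<in> {1..n} \<longrightarrow> f v \<in> {0..K}) \<and> (v \<notin> {1..n} \<longrightarrow> f v = 0)}"
    using finite_set_of_finite_funs[of "{1..n}" "{0..K}" 0] by simp
  ultimately show ?thesis
    by (rule finite_subset)
qed

text \<open>Markov's inequality for the work makes the Cesaro averages tight.\<close>
lemma cesaro_tight:
  assumes load: "load < 1" and M: "0 < M"
  shows "1 - work_bound / M \<le> sum (cesaro m) {x \<in> states n. work x < M}"
proof -
  let ?low = "\<lambda>x. cesaro m x * (if work x < M then 1 else 0)"
  let ?high = "\<lambda>x. cesaro m x * (if work x < M then 0 else 1)"
  have "infsum ?low (states n) = infsum (cesaro m) {x \<in> states n. work x < M}"
    by (intro infsum_cong_neutral) auto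
  then have low: "infsum ?low (states n) = sum (cesaro m) {x \<in> states n. work x < M}"
    using finite_work_below by simp
  have summable: "(\<lambda>x. 1 / M * (cesaro m x * work x)) summable_on states n"
    by (rule summable_on_cmult_right[OF fin_supp_summable[OF fin_supp_cesaro]])
  have "infsum ?high (states n) \<le> infsum (\<lambda>x. 1 / M * (cesaro m x * work x)) (states n)"
  proof (rule infsum_mono)
    fix x
    show "?high x \<le> 1 / M * (cesaro m x * work x)"
      using M cesaro_nonneg[of m x] work_nonneg[of x] mult_left_mono[of M "work x" "cesaro m x"]
      by (auto simp: field_simps)
  qed (rule fin_supp_summable[OF fin_supp_cesaro], rule summable)
  also have "\<dots> \<le> work_bound / M"
    using cesaro_mean_work[OF load, of m] M unfolding infsum_cmult_right' by (simp add: divide_right_mono)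
  finally have high: "infsum ?high (states n) \<le> work_bound / M" .
  have "(\<lambda>x. ?low x + ?high x) = cesaro m"
    by (auto simp: fun_eq_iff)
  then have "1 = infsum (\<lambda>x. ?low x + ?high x) (states n)"
    using cesaro_mass[of m] by simp
  also have "\<dots> = infsum ?low (states n) + infsum ?high (states n)"
    by (intro infsum_add fin_supp_summable[OF fin_supp_cesaro])
  finally show ?thesis
    using low high by simp
qed

lemma cesaro_balance:
  assumes x: "x \<in> states n"
  shows "\<bar>inflow (cesaro m) x - out_rate x * cesaro m x\<bar> \<le> max_rate / real (Suc m)"
proof -
  have step: "inflow (unif_dist k) x - out_rate x * unif_dist k x = max_rate * (unif_dist (Suc k) x - unif_dist k x)" for k
    unfolding unif_dist_Suc unif_step_def using x max_rate_pos by (simp add: field_simps)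
  have "inflow (cesaro m) x - out_rate x * cesaro m x
      = (\<Sum>k<Suc m. inflow (unif_dist k) x - out_rate x * unif_dist k x) / real (Suc m)"
    unfolding cesaro_def divide_inverse mult.commute[of _ "inverse _"] inflow_cmult inflow_sum
    by (simp add: sum_subtractf sum_distrib_left algebra_simps del: sum.lessThan_Suc)
  also have "\<dots> = max_rate * (unif_dist (Suc m) x - unif_dist 0 x) / real (Suc m)"
    unfolding step sum_distrib_left[symmetric] sum_lessThan_telescope[of "\<lambda>k. unif_dist k x"] ..
  finally have "inflow (cesaro m) x - out_rate x * cesaro m x = max_rate * (unif_dist (Suc m) x - unif_dist 0 x) / real (Suc m)" .
  moreover have "\<bar>unif_dist (Suc m) x - unif_dist 0 x\<bar> \<le> 1"
    using unif_dist_nonneg[of "Suc m" x] unif_dist_le_1[OF x, of "Suc m"]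
      unif_dist_nonneg[of 0 x] unif_dist_le_1[OF x, of 0] by linarith
  ultimately show ?thesis
    using max_rate_pos by (simp add: abs_mult divide_right_mono mult_left_le)
qed

lemma cesaro_convergent_subseq:
  obtains d \<pi> where "strict_mono d" "\<And>x. (\<lambda>j. cesaro (d j) x) \<longlonglongrightarrow> \<pi> x"
    "\<And>x. x \<notin> states n \<Longrightarrow> \<pi> x = 0"
proof -
  define e where "e = from_nat_into (states n)"
  have e: "e k \<in> states n" for k
    unfolding e_def using from_nat_into idle_in_states by blast
  have bounded: "\<bar>cesaro m (e k)\<bar> \<le> 1" for m k
    using cesaro_nonneg[of m "e k"] cesaro_le_1[OF e] by simp
  obtain d where d: "strict_mono d" "\<And>k. convergent (\<lambda>j. cesaro (d j) (e k))"
    using bounded_double_seq_diagonal_convergent[where f="\<lambda>m k. cesaro m (e k)", OF bounded] by blast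
  have outside: "cesaro m x = 0" if "x \<notin> states n" for m x
    using fin_supp_cesaro that by (simp add: fin_supp_def)
  have "convergent (\<lambda>j. cesaro (d j) x)" for x
  proof (cases "x \<in> states n")
    case True
    then show ?thesis
      using d(2) from_nat_into_surj[OF countable_states True] unfolding e_def by metis
  qed (simp add: outside convergent_const)
  then have "(\<lambda>j. cesaro (d j) x) \<longlonglongrightarrow> lim (\<lambda>j. cesaro (d j) x)" for x
    by (simp add: convergent_LIMSEQ_iff)
  moreover have "lim (\<lambda>j. cesaro (d j) x) = 0" if "x \<notin> states n" for x
    using outside[OF that] by (simp add: limI)
  ultimately show ?thesis
    using that[of d "\<lambda>x. lim (\<lambda>j. cesaro (d j) x)"] d(1) by blast
qed

lemma cesaro_limit_balance:
  assumes d: "strict_mono d" and lim: "\<And>x. (\<lambda>j. cesaro (d j) x) \<longlonglongrightarrow> \<pi> x" and x: "x \<in> states n"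
  shows "\<pi> x * out_rate x = inflow \<pi> x"
proof -
  have "(\<lambda>j. inflow (cesaro (d j)) x - out_rate x * cesaro (d j) x) \<longlonglongrightarrow> inflow \<pi> x - out_rate x * \<pi> x"
    by (intro tendsto_diff tendsto_mult_left inflow_tendsto lim)
  moreover have "(\<lambda>j. inflow (cesaro (d j)) x - out_rate x * cesaro (d j) x) \<longlonglongrightarrow> 0"
  proof (rule Lim_null_comparison)
    show "\<forall>\<^sub>F j in sequentially. norm (inflow (cesaro (d j)) x - out_rate x * cesaro (d j) x) \<le> max_rate * inverse (real (Suc j))"
    proof (intro always_eventually allI)
      fix j
      have "norm (inflow (cesaro (d j)) x - out_rate x * cesaro (d j) x) \<le> max_rate / real (Suc (d j))"
        using cesaro_balance[OF x] by simp
      also have "\<dots> \<le> max_rate / real (Suc j)"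
        using seq_suble[OF d, of j] max_rate_pos by (intro divide_left_mono) auto
      finally show "norm (inflow (cesaro (d j)) x - out_rate x * cesaro (d j) x) \<le> max_rate * inverse (real (Suc j))"
        by (simp add: field_simps)
    qed
    show "(\<lambda>j. max_rate * inverse (real (Suc j))) \<longlonglongrightarrow> 0"
      using tendsto_mult_left[OF LIMSEQ_inverse_real_of_nat, of max_rate] by simp
  qed
  ultimately have "inflow \<pi> x - out_rate x * \<pi> x = 0"
    by (rule LIMSEQ_unique)
  then show ?thesis
    by (simp add: algebra_simps)
qed

text \<open>Mass \<open>\<le> 1\<close> passes to pointwise limits; tightness excludes escape of mass to infinity.\<close>
lemma cesaro_limit_has_sum_1:
  assumes load: "load < 1" and lim: "\<And>x. (\<lambda>j. cesaro (d j) x) \<longlonglongrightarrow> \<pi> x"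
  shows "(\<pi> has_sum 1) (states n)"
proof -
  have nonneg: "0 \<le> \<pi> x" for x
    by (rule LIMSEQ_le_const[OF lim]) (use cesaro_nonneg in auto)
  have finite_sums: "sum \<pi> F \<le> 1" if F: "finite F" "F \<subseteq> states n" for F
  proof (rule LIMSEQ_le_const2)
    show "(\<lambda>j. sum (cesaro (d j)) F) \<longlonglongrightarrow> sum \<pi> F"
      by (intro tendsto_sum lim)
    have "sum (cesaro (d j)) F \<le> infsum (cesaro (d j)) (states n)" for j
      using F cesaro_nonneg fin_supp_summable[OF fin_supp_cesaro, of "d j" "\<lambda>_. 1" "states n"]
      by (intro finite_sum_le_infsum) auto
    then show "\<exists>N. \<forall>j\<ge>N. sum (cesaro (d j)) F \<le> 1"
      using cesaro_mass by auto
  qed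
  have tight: "1 - work_bound / M \<le> sum \<pi> {x \<in> states n. work x < M}" if M: "0 < M" for M
  proof (rule LIMSEQ_le_const)
    show "(\<lambda>j. sum (cesaro (d j)) {x \<in> states n. work x < M}) \<longlonglongrightarrow> sum \<pi> {x \<in> states n. work x < M}"
      by (intro tendsto_sum lim)
    show "\<exists>N. \<forall>j\<ge>N. 1 - work_bound / M \<le> sum (cesaro (d j)) {x \<in> states n. work x < M}"
      using cesaro_tight[OF load M] by blast
  qed
  have summable: "\<pi> summable_on states n"
    using nonneg finite_sums by (intro nonneg_bdd_above_summable_on bdd_aboveI) auto
  have "infsum \<pi> (states n) \<le> 1"
    by (rule infsum_le_finite_sums[OF summable finite_sums])
  moreover have "1 \<le> infsum \<pi> (states n)"
  proof (rule ccontr)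
    assume "\<not> 1 \<le> infsum \<pi> (states n)"
    then have less: "infsum \<pi> (states n) < 1"
      by simp
    define M where "M = (work_bound + 1) / (1 - infsum \<pi> (states n))"
    have M: "0 < M"
      unfolding M_def using less work_bound_nonneg[OF load] by simp
    have "work_bound / M < 1 - infsum \<pi> (states n)"
      unfolding M_def using less work_bound_nonneg[OF load] by (simp add: field_simps)
    moreover have "sum \<pi> {x \<in> states n. work x < M} \<le> infsum \<pi> (states n)"
      using finite_work_below nonneg by (intro finite_sum_le_infsum summable) auto
    ultimately show False
      using tight[OF M] by simp
  qed
  ultimately show ?thesis
    using summable by (metis antisym has_sum_infsum)
qed

lemma stationary_cesaro_limit:
  assumes load: "load < 1" and d: "strict_mono d"
    and lim: "\<And>x. (\<lambda>j. cesaro (d j) x) \<longlonglongrightarrow> \<pi> x" and outside: "\<And>x. x \<notin> states n \<Longrightarrow> \<pi> x = 0"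
  shows "stationary n lam r \<pi>"
proof -
  have "0 \<le> \<pi> x" for x
    by (rule LIMSEQ_le_const[OF lim]) (use cesaro_nonneg in auto)
  then show ?thesis
    unfolding stationary_def
    using outside cesaro_limit_has_sum_1[OF load lim] cesaro_limit_balance[OF d lim]
    by (simp add: qout_eq infsum_inflow)
qed

theorem exists_stationary: "load < 1 \<Longrightarrow> \<exists>\<pi>. stationary n lam r \<pi>"
  using cesaro_convergent_subseq stationary_cesaro_limit by metis

end

context beam_line
begin

theorem pos_recurrent_iff: "pos_recurrent n lam r \<longleftrightarrow> load < 1"
proof
  assume "pos_recurrent n lam r"
  then have "mean_return n lam r idle < \<infinity>"
    using idle_in_states unfolding pos_recurrent_def by blast
  then show "load < 1"
    using mean_return_idle_infinite by force
next
  assume "load < 1"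
  then show "pos_recurrent n lam r"
    unfolding pos_recurrent_def using irreducible mean_return_finite by blast
qed

lemma load_eq: "load = (\<Sum>v\<in>{1..n}. lam v / r v)"
  by (simp add: load_def inv_r_def)

end

theorem theorem3:
  fixes n :: nat and lam r :: "nat \<Rightarrow> real"
  assumes "n \<ge> 1"
    and "\<forall>v\<in>{1..n}. lam v > 0" and "\<forall>v\<in>{1..n}. r v > 0"
  defines "\<rho> \<equiv> (\<lambda>v. lam v / r v)"
  shows "(pos_recurrent n lam r \<longleftrightarrow> (\<Sum>v\<in>{1..n}. \<rho> v) < 1)
    \<and> ((\<Sum>v\<in>{1..n}. \<rho> v) < 1 \<longrightarrow>
         (\<exists>\<pi>. stationary n lam r \<pi>) \<and>
         (\<forall>\<pi>. stationary n lam r \<pi> \<longrightarrow> (\<forall>v\<in>{1..n}.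
            mean_N n \<pi> v =
              \<rho> v * (1 + (\<Sum>v'\<in>{v..n}. \<rho> v' * (r v / r v' - 1)))
              / ((1 - (\<Sum>v'\<in>{v..n}. \<rho> v')) * (1 - (\<Sum>v'\<in>{v<..n}. \<rho> v')))
            \<and> lam v / mean_N n \<pi> v =
              r v * (1 - (\<Sum>v'\<in>{v..n}. \<rho> v')) * (1 - (\<Sum>v'\<in>{v<..n}. \<rho> v'))
              / (1 + (\<Sum>v'\<in>{v..n}. \<rho> v' * (r v / r v' - 1))))))"
proof -
  interpret beam_line n lam r
    using assms(1-3) by unfold_locales auto
  have load: "load = (\<Sum>v\<in>{1..n}. \<rho> v)"
    unfolding \<rho>_def by (rule load_eq)
  show ?thesis
    unfolding load[symmetric] unfolding \<rho>_def
    using pos_recurrent_iff exists_stationary stationary_mean_N stationary_throughput by blast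
qed

end
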